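(* $\mathcal{LE}(\mathbb{C})=4/\pi$, where $\mathbb{C}$ is regarded as the real Banach space $\mathbb{R}^2$ with the Euclidean norm.
   Context: For a function $f$ from a subset $X$ of a metric space $(Z,\rho)$ into a Banach space $V$, $L(f)=\sup\{\|f(x)-f(y)\|/\rho(x,y): x\neq y\}$. $\mathcal{LE}(V)$ is the infimum of the constants $c$ such that for every metric space $(Z,\rho)$, every $X\subseteq Z$ and every $f:X\to V$ there is an extension $g:Z\to V$ of $f$ with $L(g)\le cL(f)$. *)

theory Defs
  imports "HOL-Analysis.Analysis"
begin

text \<open>Lipschitz constant L(f) of f : X \<rightarrow> V w.r.t. the metric rho, as an extended
  nonnegative real (supremum over the empty set is 0; unbounded ratios give \<infinity>).\<close>
definition Lip :: "('z \<Rightarrow> 'z \<Rightarrow> real) \<Rightarrow> 'z set \<Rightarrow> ('z \<Rightarrow> 'v::real_normed_vector) \<Rightarrow> ennreal" where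
  "Lip rho X f = (SUP p \<in> {(x, y). x \<in> X \<and> y \<in> X \<and> x \<noteq> y}.
       ennreal (norm (f (fst p) - f (snd p)) / rho (fst p) (snd p)))"

definition LE_const :: "'z itself \<Rightarrow> 'v::real_normed_vector itself \<Rightarrow> real \<Rightarrow> bool" where
  "LE_const _ _ c \<longleftrightarrow>
     (\<forall>(Z::'z set) rho (X::'z set) (f::'z \<Rightarrow> 'v).
        Metric_space Z rho \<and> X \<subseteq> Z \<longrightarrow>
        (\<exists>g. (\<forall>x\<in>X. g x = f x) \<and> Lip rho Z g \<le> ennreal c * Lip rho X f))"

text \<open>LE(V), with metric spaces ranging over those carried by the type 'z.\<close>
definition LE :: "'z itself \<Rightarrow> 'v::real_normed_vector itself \<Rightarrow> real" where
  "LE tz tv = Inf {c. 0 \<le> c \<and> LE_const tz tv c}"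

end

theory Submission
  imports Defs "HOL-Library.Function_Algebras" "HOL-Real_Asymp.Real_Asymp"
begin

text \<open>Fix an even \<open>N\<close> and the directions \<open>u\<^sub>k = exp(i k \<pi>/N)\<close>.

  Upper bound: extend each coordinate \<open>f \<bullet> u\<^sub>j\<close> (\<open>j < 2N\<close>) by McShane's formula to \<open>G\<^sub>j\<close> and put
  \<open>g = (1/N) \<Sum>\<^sub>j G\<^sub>j u\<^sub>j\<close>. The \<open>u\<^sub>j\<close> form a tight frame, \<open>\<Sum>\<^sub>j (w \<bullet> u\<^sub>j) u\<^sub>j = N w\<close>, so \<open>g\<close> extends \<open>f\<close>,
  and \<open>L(g) \<le> (1/N) max\<^sub>\<alpha> \<Sum>\<^sub>j \<bar>cos (j\<pi>/N - \<alpha>)\<bar> L(f) \<le> (2/sin(\<pi>/2N) + \<pi>)/N L(f)\<close>, which tends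
  to \<open>4/\<pi> L(f)\<close>.

  Lower bound: \<open>w \<mapsto> (w \<bullet> u\<^sub>k)\<close>, \<open>k < N\<close>, embeds \<open>\<complex>\<close> into \<open>\<ell>\<^sub>\<infinity>\<^sup>N\<close> with distortion \<open>1/cos(\<pi>/2N)\<close>,
  and the image of \<open>w\<close> is \<open>\<Sum>\<^sub>l sin(\<pi>/2N) (w \<bullet> v\<^sub>l) b\<^sub>l\<close>, where \<open>v\<^sub>l = exp(i (l + 1/2) \<pi>/N)\<close> and
  \<open>b\<^sub>l\<close> is the sign vector \<open>(sgn cos((l - k + 1/2)\<pi>/N))\<^sub>k\<close>. Let \<open>g\<close> be an \<open>L\<close>-Lipschitz extension,
  to the integer combinations of the \<open>b\<^sub>l\<close> translated by the grid \<open>W(\<int> + i\<int>)\<close>, of the inverse of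
  the embedding on the grid. Averaging \<open>g\<close> over grid translates makes it almost equivariant, and
  averaging its increments along \<open>b\<^sub>l\<close> over a large box of integer combinations gives vectors \<open>A\<^sub>l\<close>
  with \<open>\<bar>A\<^sub>l\<bar> \<le> L\<close> and \<open>\<Sum>\<^sub>l sin(\<pi>/2N) (w \<bullet> v\<^sub>l) A\<^sub>l = w + O(L N)\<close> for the four points
  \<open>w = \<plusminus>W, \<plusminus>iW\<close>. Pairing with \<open>w\<close> and summing over the four points,
  \<open>4W\<^sup>2 \<le> 2N sin(\<pi>/2N) W\<^sup>2 L + O(L N W)\<close>; so \<open>4 \<le> \<pi> L\<close> as \<open>W \<rightarrow> \<infinity>\<close>, with \<open>L = c/cos(\<pi>/2N)\<close> for
  an extension constant \<open>c\<close>. The test space is countable, which is why this bound is proved for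
  metric spaces on \<^typ>\<open>nat\<close>.\<close>

lemma Lip_le_ennrealI:
  assumes "Metric_space A rho"
    and "\<And>x y. x \<in> A \<Longrightarrow> y \<in> A \<Longrightarrow> x \<noteq> y \<Longrightarrow> norm (g x - g y) \<le> K * rho x y"
  shows "Lip rho A g \<le> ennreal K"
  unfolding Lip_def
proof (rule SUP_least)
  fix p assume "p \<in> {(x, y). x \<in> A \<and> y \<in> A \<and> x \<noteq> y}"
  then obtain x y where p: "p = (x, y)" "x \<in> A" "y \<in> A" "x \<noteq> y" by auto
  have "rho x y > 0"
    using Metric_space.zero[OF assms(1) p(2,3)] Metric_space.nonneg[OF assms(1), of x y] p(4) by linarith
  then have "norm (g x - g y) / rho x y \<le> K"
    using assms(2)[OF p(2,3,4)] by (simp add: divide_le_eq)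
  then show "ennreal (norm (g (fst p) - g (snd p)) / rho (fst p) (snd p)) \<le> ennreal K"
    using p by (simp add: ennreal_leI)
qed

lemma Lip_le_ennrealD:
  assumes "Metric_space A rho" "Lip rho A g \<le> ennreal K" "K \<ge> 0" "x \<in> A" "y \<in> A"
  shows "norm (g x - g y) \<le> K * rho x y"
proof (cases "x = y")
  case True
  then show ?thesis using Metric_space.nonneg[OF assms(1)] assms(3) by simp
next
  case False
  have rho_pos: "rho x y > 0"
    using Metric_space.zero[OF assms(1) assms(4,5)] Metric_space.nonneg[OF assms(1), of x y] False
    by linarith
  have "(x, y) \<in> {(x, y). x \<in> A \<and> y \<in> A \<and> x \<noteq> y}" using assms False by auto
  then have "ennreal (norm (g x - g y) / rho x y) \<le> Lip rho A g"
    unfolding Lip_def by (rule SUP_upper2) simp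
  also have "\<dots> \<le> ennreal K" by fact
  finally have "norm (g x - g y) / rho x y \<le> K" using assms(3) by (simp add: ennreal_le_iff)
  then show ?thesis using rho_pos by (simp add: divide_le_eq)
qed

lemma Lip_cong:
  assumes "\<And>x. x \<in> A \<Longrightarrow> g x = h x"
  shows "Lip d A g = Lip d A h"
  unfolding Lip_def by (rule SUP_cong) (use assms in auto)

lemma Lip_reindex:
  assumes inj: "inj_on \<iota> A" and inv: "\<And>x. x \<in> A \<Longrightarrow> \<kappa> (\<iota> x) = x"
  shows "Lip (\<lambda>a b. d (\<kappa> a) (\<kappa> b)) (\<iota> ` A) h = Lip d A (\<lambda>x. h (\<iota> x))"
proof -
  have pairs: "{(a, b). a \<in> \<iota> ` A \<and> b \<in> \<iota> ` A \<and> a \<noteq> b}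
      = (\<lambda>(x, y). (\<iota> x, \<iota> y)) ` {(x, y). x \<in> A \<and> y \<in> A \<and> x \<noteq> y}"
    using inj by (auto simp: image_iff dest: inj_onD)
  show ?thesis
    unfolding Lip_def pairs image_image by (rule SUP_cong) (use inv in auto)
qed

lemma LE_const_nat_countable:
  fixes f :: "'a \<Rightarrow> 'v::real_normed_vector"
  assumes LE: "LE_const TYPE(nat) TYPE('v) c" and "countable S" and MS: "Metric_space S d"
    and XS: "X \<subseteq> S"
  shows "\<exists>g. (\<forall>x\<in>X. g x = f x) \<and> Lip d S g \<le> ennreal c * Lip d X f"
proof -
  define \<iota> where "\<iota> = to_nat_on S"
  define \<kappa> where "\<kappa> = from_nat_into S"
  have inj: "inj_on \<iota> S" unfolding \<iota>_def using \<open>countable S\<close> by blast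
  have inv: "\<kappa> (\<iota> x) = x" if "x \<in> S" for x unfolding \<iota>_def \<kappa>_def using \<open>countable S\<close> that by simp
  define \<rho> where "\<rho> a b = d (\<kappa> a) (\<kappa> b)" for a b
  have "Metric_space (\<iota> ` S) \<rho>"
  proof
    fix x y show "0 \<le> \<rho> x y" unfolding \<rho>_def using Metric_space.nonneg[OF MS] .
    show "\<rho> x y = \<rho> y x" unfolding \<rho>_def using Metric_space.commute[OF MS] .
  next
    fix x y assume "x \<in> \<iota> ` S" "y \<in> \<iota> ` S"
    then show "\<rho> x y = 0 \<longleftrightarrow> x = y"
      unfolding \<rho>_def using inv Metric_space.zero[OF MS] by auto
  next
    fix x y z assume "x \<in> \<iota> ` S" "y \<in> \<iota> ` S" "z \<in> \<iota> ` S"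
    then show "\<rho> x z \<le> \<rho> x y + \<rho> y z"
      unfolding \<rho>_def using inv Metric_space.triangle[OF MS] by auto
  qed
  moreover have "\<iota> ` X \<subseteq> \<iota> ` S" using XS by auto
  ultimately obtain g' where g': "\<forall>x\<in>\<iota> ` X. g' x = f (\<kappa> x)"
    "Lip \<rho> (\<iota> ` S) g' \<le> ennreal c * Lip \<rho> (\<iota> ` X) (\<lambda>a. f (\<kappa> a))"
    using LE[unfolded LE_const_def, rule_format, of "\<iota> ` S" \<rho> "\<iota> ` X" "\<lambda>a. f (\<kappa> a)"] by blast
  have "Lip d S (\<lambda>x. g' (\<iota> x)) = Lip \<rho> (\<iota> ` S) g'"
    unfolding \<rho>_def by (rule Lip_reindex[OF inj inv, symmetric])
  moreover have "Lip \<rho> (\<iota> ` X) (\<lambda>a. f (\<kappa> a)) = Lip d X f"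
  proof -
    have "Lip \<rho> (\<iota> ` X) (\<lambda>a. f (\<kappa> a)) = Lip d X (\<lambda>x. f (\<kappa> (\<iota> x)))"
      unfolding \<rho>_def by (rule Lip_reindex) (use inj XS inv in \<open>auto intro: inj_on_subset\<close>)
    also have "\<dots> = Lip d X f" by (rule Lip_cong) (use inv XS in auto)
    finally show ?thesis .
  qed
  moreover have "\<forall>x\<in>X. g' (\<iota> x) = f x" using g'(1) inv XS by auto
  ultimately show ?thesis using g'(2) by (intro exI[of _ "\<lambda>x. g' (\<iota> x)"]) auto
qed

section \<open>Trigonometric sums\<close>

definition dir :: "nat \<Rightarrow> nat \<Rightarrow> complex" where
  "dir N k = cis (real k * (pi / real N))"

definition mid_dir :: "nat \<Rightarrow> nat \<Rightarrow> complex" where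
  "mid_dir N i = cis ((real i + 1/2) * (pi / real N))"

definition folded_cis :: "nat \<Rightarrow> int \<Rightarrow> complex" where
  "folded_cis N j = of_real (sgn (cos ((real_of_int j + 1/2) * (pi / real N))))
     * cis ((real_of_int j + 1/2) * (pi / real N))"

lemma norm_dir [simp]: "norm (dir N k) = 1"
  by (simp add: dir_def)

lemma norm_mid_dir [simp]: "norm (mid_dir N i) = 1"
  by (simp add: mid_dir_def)

lemma folded_cis_add_period:
  assumes "N > 0"
  shows "folded_cis N (j + int N) = folded_cis N j"
proof -
  have "(real_of_int (j + int N) + 1/2) * (pi / real N) = (real_of_int j + 1/2) * (pi / real N) + pi"
    using assms by (simp add: field_simps)
  then show ?thesis
    unfolding folded_cis_def by (simp add: cis_mult[symmetric] sgn_minus)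
qed

lemma sum_folded_cis_shift:
  assumes "N > 0"
  shows "(\<Sum>i<N. folded_cis N (a + int i)) = (\<Sum>i<N. folded_cis N (b + int i))"
proof -
  define S where "S a = (\<Sum>i<N. folded_cis N (a + int i))" for a
  have step: "S (a + 1) = S a" for a
  proof -
    have "S (a + 1) = (\<Sum>i<N. folded_cis N (a + int (Suc i)))"
      unfolding S_def by (simp add: ac_simps)
    also have "\<dots> = (\<Sum>i<Suc N. folded_cis N (a + int i)) - folded_cis N a"
      by (subst sum.lessThan_Suc_shift) simp
    also have "\<dots> = S a + folded_cis N (a + int N) - folded_cis N a"
      unfolding S_def by simp
    finally show ?thesis using folded_cis_add_period[OF assms] by simp
  qed
  have "S a = S 0" for a
  proof (induction a rule: int_induct[where k = 0])
    case (step2 i)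
    then show ?case using step[of "i - 1"] by simp
  qed (use step in simp_all)
  then show ?thesis unfolding S_def by metis
qed

lemma sum_cis_midpoints_telescope:
  "(\<Sum>i<n. cis ((a + real i + 1/2) * h)) * (2 * \<i> * sin (h/2)) = cis ((a + real n) * h) - cis (a * h)"
proof -
  have "cis ((a + real i + 1/2) * h) * (2 * \<i> * sin (h/2))
      = cis ((a + real (Suc i)) * h) - cis ((a + real i) * h)" for i
  proof -
    have "2 * \<i> * complex_of_real (sin (h/2)) = cis (h/2) - cis (-(h/2))"
      by (simp add: complex_eq_iff)
    then have "cis ((a + real i + 1/2) * h) * (2 * \<i> * sin (h/2))
        = cis ((a + real i + 1/2) * h) * (cis (h/2) - cis (-(h/2)))" by simp
    also have "\<dots> = cis ((a + real i + 1/2) * h + h/2) - cis ((a + real i + 1/2) * h + -(h/2))"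
      by (simp add: algebra_simps cis_mult)
    also have "\<dots> = cis ((a + real (Suc i)) * h) - cis ((a + real i) * h)"
      by (simp add: algebra_simps)
    finally show ?thesis .
  qed
  then have "(\<Sum>i<n. cis ((a + real i + 1/2) * h)) * (2 * \<i> * sin (h/2))
      = (\<Sum>i<n. cis ((a + real (Suc i)) * h) - cis ((a + real i) * h))"
    by (simp add: sum_distrib_right)
  also have "\<dots> = cis ((a + real n) * h) - cis ((a + real 0) * h)"
    by (rule sum_lessThan_telescope)
  finally show ?thesis by simp
qed

lemma sin_quarter_step_pos:
  assumes "N > 0"
  shows "sin (pi / real N / 2) > 0"
  by (rule sin_gt_zero) (use assms in \<open>auto simp: field_simps\<close>)

lemma cos_quarter_step_pos:
  assumes "N \<ge> 2"
  shows "cos (pi / real N / 2) > 0"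
proof (rule cos_gt_zero_pi)
  have "0 < pi / real N / 2" using assms by simp
  moreover have "- (pi / 2) < 0" by simp
  ultimately show "- (pi / 2) < pi / real N / 2" by linarith
  have "pi / real N \<le> pi / 2" by (rule divide_left_mono) (use assms in auto)
  then have "pi / real N < pi" using pi_gt_zero by linarith
  then show "pi / real N / 2 < pi / 2" by simp
qed

text \<open>For even \<open>N\<close> the \<open>N\<close> consecutive angles starting at \<open>-\<pi>/2\<close> all have positive cosine,
  so the folding is trivial there and the sum telescopes.\<close>

lemma sum_folded_cis:
  assumes "even N" "N > 0"
  shows "(\<Sum>i<N. folded_cis N (a + int i)) = complex_of_real (1 / sin (pi / real N / 2))"
proof -
  obtain m where N: "N = 2 * m" using assms(1) by (rule evenE)
  let ?h = "pi / real N"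
  have s0: "sin (?h/2) > 0" by (rule sin_quarter_step_pos[OF assms(2)])
  have "(\<Sum>i<N. folded_cis N (a + int i)) = (\<Sum>i<N. folded_cis N (- int m + int i))"
    by (rule sum_folded_cis_shift[OF assms(2)])
  also have "\<dots> = (\<Sum>i<N. cis ((- real m + real i + 1/2) * ?h))"
  proof (rule sum.cong[OF refl])
    fix i assume "i \<in> {..<N}"
    define x where "x = real i - real m + 1/2"
    have angle: "(real_of_int (- int m + int i) + 1/2) * ?h = x * (pi / (2 * real m))"
      using N by (simp add: x_def)
    have "- real m < x" "x < real m" using \<open>i \<in> {..<N}\<close> N by (auto simp: x_def)
    moreover have m_pos: "real m > 0" using N assms(2) by simp
    ultimately have "- real m * (pi / (2 * real m)) < x * (pi / (2 * real m))"
      "x * (pi / (2 * real m)) < real m * (pi / (2 * real m))"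
      by (intro mult_strict_right_mono; simp)+
    then have "- (pi/2) < x * (pi / (2 * real m))" "x * (pi / (2 * real m)) < pi/2"
      using m_pos by auto
    then have "cos ((real_of_int (- int m + int i) + 1/2) * ?h) > 0"
      unfolding angle by (rule cos_gt_zero_pi)
    then show "folded_cis N (- int m + int i) = cis ((- real m + real i + 1/2) * ?h)"
      unfolding folded_cis_def by simp
  qed
  also have "\<dots> = (cis ((- real m + real N) * ?h) - cis ((- real m) * ?h)) / (2 * \<i> * sin (?h/2))"
    using sum_cis_midpoints_telescope[where n = N and a = "- real m" and h = ?h] s0
    by (simp add: eq_divide_eq)
  also have "(- real m + real N) * ?h = pi/2" using N assms(2) by (simp add: field_simps)
  also have "(- real m) * ?h = - (pi/2)" using N assms(2) by (simp add: field_simps)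
  finally show ?thesis using s0 by (simp add: complex_eq_iff)
qed

lemma sum_sign_cos_mid_dir:
  assumes "even N" "N > 0"
  shows "(\<Sum>i<N. sgn (cos ((real i - real k + 1/2) * (pi / real N))) *\<^sub>R mid_dir N i)
       = dir N k * complex_of_real (1 / sin (pi / real N / 2))"
proof -
  have "(\<Sum>i<N. sgn (cos ((real i - real k + 1/2) * (pi / real N))) *\<^sub>R mid_dir N i)
      = (\<Sum>i<N. dir N k * folded_cis N (- int k + int i))"
    by (rule sum.cong[OF refl])
      (simp add: folded_cis_def dir_def mid_dir_def scaleR_conv_of_real cis_mult algebra_simps)
  also have "\<dots> = dir N k * (\<Sum>i<N. folded_cis N (- int k + int i))"
    by (simp add: sum_distrib_left)
  finally show ?thesis unfolding sum_folded_cis[OF assms] .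
qed

lemma sum_lessThan_add_split:
  fixes f :: "nat \<Rightarrow> 'a::comm_monoid_add"
  shows "(\<Sum>i<n + k. f i) = (\<Sum>i<n. f i) + (\<Sum>i<k. f (n + i))"
  by (induction k) (simp_all add: add.assoc)

lemma sum_abs_cos_midpoints:
  assumes "even N" "N > 0"
  shows "(\<Sum>i<2*N. \<bar>cos ((real_of_int a + real i + 1/2) * (pi / real N))\<bar>) = 2 / sin (pi / real N / 2)"
proof -
  have re: "Re (folded_cis N j) = \<bar>cos ((real_of_int j + 1/2) * (pi / real N))\<bar>" for j
    unfolding folded_cis_def by (simp add: sgn_real_def)
  have "(\<Sum>i<2*N. \<bar>cos ((real_of_int a + real i + 1/2) * (pi / real N))\<bar>)
      = Re (\<Sum>i<2*N. folded_cis N (a + int i))"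
    by (simp add: re Re_sum)
  also have "(\<Sum>i<2*N. folded_cis N (a + int i))
      = (\<Sum>i<N. folded_cis N (a + int i)) + (\<Sum>i<N. folded_cis N ((a + int N) + int i))"
    unfolding mult_2 sum_lessThan_add_split by (simp add: ac_simps)
  finally show ?thesis unfolding sum_folded_cis[OF assms] by simp
qed

lemma abs_cos_le_abs_cos_plus_dist: "\<bar>cos (x::real)\<bar> \<le> \<bar>cos y\<bar> + \<bar>x - y\<bar>"
proof -
  have "\<bar>cos x - cos y\<bar> = 2 * \<bar>sin ((x + y) / 2)\<bar> * \<bar>sin ((y - x) / 2)\<bar>"
    by (simp add: cos_diff_cos abs_mult)
  also have "\<dots> \<le> 2 * 1 * \<bar>(y - x) / 2\<bar>"
    by (intro mult_mono abs_sin_x_le_abs_x) auto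
  also have "\<dots> = \<bar>x - y\<bar>" by simp
  finally show ?thesis by linarith
qed

text \<open>Compare each term with the nearest midpoint angle, at distance at most \<open>\<pi>/(2N)\<close>.\<close>

lemma sum_abs_cos_dir_le:
  assumes "even N" "N > 0"
  shows "(\<Sum>j<2*N. \<bar>cos (real j * (pi / real N) - \<alpha>)\<bar>) \<le> 2 / sin (pi / real N / 2) + pi"
proof -
  define h where "h = pi / real N"
  have "h > 0" using assms by (simp add: h_def)
  define q where "q = \<lfloor>\<alpha> / h\<rfloor>"
  define \<rho> where "\<rho> = \<alpha> - real_of_int q * h"
  have "real_of_int q \<le> \<alpha> / h" "\<alpha> / h < real_of_int q + 1" unfolding q_def by linarith+
  then have "0 \<le> \<rho>" "\<rho> < h"
    using \<open>h > 0\<close> unfolding \<rho>_def by (simp_all add: pos_le_divide_eq pos_divide_less_eq algebra_simps)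
  then have "\<bar>h/2 - \<rho>\<bar> \<le> h/2" by (simp only: abs_le_iff) linarith
  moreover have "(real j * h - \<alpha>) - (real_of_int (-q-1) + real j + 1/2) * h = h/2 - \<rho>" for j
    unfolding \<rho>_def by (simp add: algebra_simps)
  ultimately have offset: "\<bar>(real j * h - \<alpha>) - (real_of_int (-q-1) + real j + 1/2) * h\<bar> \<le> h/2" for j
    by simp
  have "(\<Sum>j<2*N. \<bar>cos (real j * h - \<alpha>)\<bar>)
      \<le> (\<Sum>j<2*N. \<bar>cos ((real_of_int (-q-1) + real j + 1/2) * h)\<bar> + h/2)"
  proof (rule sum_mono)
    fix j
    show "\<bar>cos (real j * h - \<alpha>)\<bar> \<le> \<bar>cos ((real_of_int (-q-1) + real j + 1/2) * h)\<bar> + h/2"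
      using abs_cos_le_abs_cos_plus_dist[of "real j * h - \<alpha>" "(real_of_int (-q-1) + real j + 1/2) * h"]
        offset[of j] by linarith
  qed
  also have "\<dots> = 2 / sin (h / 2) + real (2*N) * (h/2)"
    unfolding sum.distrib h_def sum_abs_cos_midpoints[OF assms] by simp
  also have "real (2*N) * (h/2) = pi" using assms by (simp add: h_def)
  finally show ?thesis unfolding h_def .
qed

text \<open>Write \<open>(w \<bullet> u) u = (w + cnj w u\<^sup>2) / 2\<close> for \<open>\<bar>u\<bar> = 1\<close>: the \<open>cnj w\<close> parts sum to zero
  as a geometric sum of \<open>N\<close>-th roots of unity.\<close>

lemma sum_inner_dir_scaleR_dir:
  assumes "N \<ge> 2"
  shows "(\<Sum>j<2*N. (w \<bullet> dir N j) *\<^sub>R dir N j) = of_nat N * w"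
proof -
  let ?h = "pi / real N"
  let ?\<zeta> = "cis (2 * pi / real N)"
  have dir_term: "(w \<bullet> dir N j) *\<^sub>R dir N j = w / 2 + cnj w / 2 * ?\<zeta> ^ j" for j
  proof -
    have "?\<zeta> ^ j = cis (real j * (2 * pi / real N))"
      by (simp only: Complex.DeMoivre)
    also have "\<dots> = cis (real j * ?h + real j * ?h)" by (simp add: field_simps)
    finally have zeta_pow: "?\<zeta> ^ j = dir N j * dir N j"
      by (simp add: dir_def cis_mult)
    have cos_sq: "cos t * cos t = 1 - sin t * sin t" for t :: real
      using sin_cos_squared_add[of t] by (simp add: power2_eq_square)
    show ?thesis unfolding zeta_pow dir_def
      by (simp add: complex_eq_iff inner_complex_def algebra_simps cos_sq) (simp add: field_simps)
  qed
  have "?\<zeta> \<noteq> 1"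
  proof
    assume "?\<zeta> = 1"
    then have "cos (2 * pi / real N) = 1" by (simp add: complex_eq_iff)
    moreover have "0 < 2 * pi / real N" "2 * pi / real N \<le> pi" using assms by (auto simp: field_simps)
    then have "cos (2 * pi / real N) < 1" using cos_monotone_0_pi[of 0 "2 * pi / real N"] by simp
    ultimately show False by simp
  qed
  moreover have "?\<zeta> ^ (2 * N) = 1"
    by (simp add: Complex.DeMoivre) (use assms in \<open>simp add: complex_eq_iff field_simps\<close>)
  ultimately have "(\<Sum>j<2*N. ?\<zeta> ^ j) = 0" by (simp add: geometric_sum)
  moreover have "(\<Sum>j<2*N. w / 2 + cnj w / 2 * ?\<zeta> ^ j)
      = of_nat (2*N) * (w/2) + cnj w / 2 * (\<Sum>j<2*N. ?\<zeta> ^ j)"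
    by (simp add: sum.distrib sum_distrib_left)
  ultimately show ?thesis unfolding dir_term by simp
qed

section \<open>The upper bound\<close>

definition mcshane :: "('z \<Rightarrow> 'z \<Rightarrow> real) \<Rightarrow> 'z set \<Rightarrow> real \<Rightarrow> ('z \<Rightarrow> real) \<Rightarrow> 'z \<Rightarrow> real" where
  "mcshane rho X lam phi z = (INF x\<in>X. phi x + lam * rho z x)"

context
  fixes Z :: "'z set" and rho :: "'z \<Rightarrow> 'z \<Rightarrow> real" and X lam and phi :: "'z \<Rightarrow> real"
  assumes MS: "Metric_space Z rho" and XZ: "X \<subseteq> Z" and X_ne: "X \<noteq> {}" and lam: "lam \<ge> 0"
    and phi_lip: "\<And>x y. x \<in> X \<Longrightarrow> y \<in> X \<Longrightarrow> phi x - phi y \<le> lam * rho x y"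
begin

lemma mcshane_bdd_below:
  assumes "z \<in> Z"
  shows "bdd_below ((\<lambda>x. phi x + lam * rho z x) ` X)"
proof -
  obtain x0 where "x0 \<in> X" using X_ne by blast
  show ?thesis
  proof (rule bdd_belowI2)
    fix x assume "x \<in> X"
    have "rho x0 x \<le> rho x0 z + rho z x"
      using Metric_space.triangle[OF MS] \<open>x0 \<in> X\<close> \<open>x \<in> X\<close> assms XZ by blast
    then have "lam * rho x0 x \<le> lam * rho x0 z + lam * rho z x"
      using lam by (metis distrib_left mult_left_mono)
    then show "phi x0 - lam * rho x0 z \<le> phi x + lam * rho z x"
      using phi_lip[OF \<open>x0 \<in> X\<close> \<open>x \<in> X\<close>] by linarith
  qed
qed

lemma mcshane_le:
  assumes "z \<in> Z" "x \<in> X"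
  shows "mcshane rho X lam phi z \<le> phi x + lam * rho z x"
  unfolding mcshane_def by (rule cInf_lower) (use assms mcshane_bdd_below in auto)

lemma mcshane_eq:
  assumes "x \<in> X"
  shows "mcshane rho X lam phi x = phi x"
proof (rule antisym)
  have "rho x x = 0" using Metric_space.zero[OF MS] assms XZ by auto
  then show "mcshane rho X lam phi x \<le> phi x"
    using mcshane_le[of x x] assms XZ by auto
  show "phi x \<le> mcshane rho X lam phi x"
    unfolding mcshane_def by (rule cINF_greatest[OF X_ne]) (use phi_lip[OF assms] in force)
qed

lemma mcshane_lipschitz:
  assumes "z \<in> Z" "z' \<in> Z"
  shows "\<bar>mcshane rho X lam phi z - mcshane rho X lam phi z'\<bar> \<le> lam * rho z z'"
proof -
  have one_side: "mcshane rho X lam phi a - lam * rho a b \<le> mcshane rho X lam phi b"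
    if "a \<in> Z" "b \<in> Z" for a b
    unfolding mcshane_def[of _ _ _ _ b]
  proof (rule cINF_greatest[OF X_ne])
    fix x assume "x \<in> X"
    have "rho a x \<le> rho a b + rho b x"
      using Metric_space.triangle[OF MS] that \<open>x \<in> X\<close> XZ by blast
    then have "lam * rho a x \<le> lam * rho a b + lam * rho b x"
      using lam by (metis distrib_left mult_left_mono)
    then show "mcshane rho X lam phi a - lam * rho a b \<le> phi x + lam * rho b x"
      using mcshane_le[OF that(1) \<open>x \<in> X\<close>] by linarith
  qed
  show ?thesis
    using one_side[OF assms] one_side[OF assms(2,1)] Metric_space.commute[OF MS, of z z']
    by (simp only: abs_le_iff) linarith
qed

end

lemma norm_sum_scaleR_dir_le:
  assumes "even N" "N > 0" and t: "\<And>j. j < 2*N \<Longrightarrow> \<bar>t j\<bar> \<le> B"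
  shows "norm (\<Sum>j<2*N. t j *\<^sub>R dir N j) \<le> B * (2 / sin (pi / real N / 2) + pi)"
proof -
  define D where "D = (\<Sum>j<2*N. t j *\<^sub>R dir N j)"
  define \<alpha> where "\<alpha> = Arg D"
  have "B \<ge> 0" using t[of 0] assms(2) by linarith
  have D_polar: "D = of_real (norm D) * cis \<alpha>"
    unfolding \<alpha>_def using rcis_cmod_Arg[of D] by (simp add: rcis_def)
  have "D \<bullet> cis \<alpha> = norm D * (cis \<alpha> \<bullet> cis \<alpha>)"
    by (subst D_polar) (simp add: scaleR_conv_of_real[symmetric])
  also have "cis \<alpha> \<bullet> cis \<alpha> = 1" by (simp add: inner_complex_def)
  finally have "norm D = D \<bullet> cis \<alpha>" by simp
  also have "\<dots> = (\<Sum>j<2*N. t j * cos (real j * (pi / real N) - \<alpha>))"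
    unfolding D_def inner_sum_left
    by (rule sum.cong[OF refl]) (simp add: dir_def inner_complex_def cos_diff algebra_simps)
  also have "\<dots> \<le> (\<Sum>j<2*N. B * \<bar>cos (real j * (pi / real N) - \<alpha>)\<bar>)"
  proof (rule sum_mono)
    fix j assume "j \<in> {..<2*N}"
    then have "\<bar>t j\<bar> * \<bar>cos (real j * (pi / real N) - \<alpha>)\<bar> \<le> B * \<bar>cos (real j * (pi / real N) - \<alpha>)\<bar>"
      using t by (intro mult_right_mono) auto
    then show "t j * cos (real j * (pi / real N) - \<alpha>) \<le> B * \<bar>cos (real j * (pi / real N) - \<alpha>)\<bar>"
      by (metis abs_ge_self abs_mult order_trans)
  qed
  also have "\<dots> \<le> B * (2 / sin (pi / real N / 2) + pi)"
    unfolding sum_distrib_left[symmetric]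
    by (rule mult_left_mono[OF sum_abs_cos_dir_le[OF assms(1,2)] \<open>B \<ge> 0\<close>])
  finally show ?thesis unfolding D_def .
qed

definition upper_const :: "nat \<Rightarrow> real" where
  "upper_const N = (2 / sin (pi / real N / 2) + pi) / real N"

lemma upper_const_pos: "N > 0 \<Longrightarrow> upper_const N > 0"
  unfolding upper_const_def using sin_quarter_step_pos[of N] by (simp add: add_pos_pos)

lemma frame_mcshane_extension:
  fixes f :: "'z \<Rightarrow> complex"
  assumes MS: "Metric_space Z rho" and XZ: "X \<subseteq> Z" and "X \<noteq> {}" and "lam \<ge> 0"
    and f_lip: "\<And>x y. x \<in> X \<Longrightarrow> y \<in> X \<Longrightarrow> norm (f x - f y) \<le> lam * rho x y"
    and "even N" "N > 0"
  obtains g where "\<And>x. x \<in> X \<Longrightarrow> g x = f x"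
    and "\<And>z z'. z \<in> Z \<Longrightarrow> z' \<in> Z \<Longrightarrow> norm (g z - g z') \<le> (upper_const N * lam) * rho z z'"
proof -
  have N2: "N \<ge> 2" using assms(6,7) by (auto elim: evenE)
  have coord_lip: "f x \<bullet> dir N j - f y \<bullet> dir N j \<le> lam * rho x y" if "x \<in> X" "y \<in> X" for x y j
    using norm_cauchy_schwarz[of "f x - f y" "dir N j"] f_lip[OF that] by (simp add: inner_diff_left)
  define G where "G j = mcshane rho X lam (\<lambda>x. f x \<bullet> dir N j)" for j
  define g where "g z = (1 / real N) *\<^sub>R (\<Sum>j<2*N. G j z *\<^sub>R dir N j)" for z
  show ?thesis
  proof
    fix x assume "x \<in> X"
    have "(\<Sum>j<2*N. G j x *\<^sub>R dir N j) = (\<Sum>j<2*N. (f x \<bullet> dir N j) *\<^sub>R dir N j)"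
      unfolding G_def using mcshane_eq[OF MS XZ assms(3,4) coord_lip \<open>x \<in> X\<close>] by simp
    also have "\<dots> = of_nat N * f x" by (rule sum_inner_dir_scaleR_dir[OF N2])
    finally show "g x = f x" unfolding g_def using N2 by (simp add: scaleR_conv_of_real)
  next
    fix z z' assume "z \<in> Z" "z' \<in> Z"
    have "g z - g z' = (1 / real N) *\<^sub>R (\<Sum>j<2*N. (G j z - G j z') *\<^sub>R dir N j)"
      unfolding g_def by (simp add: scaleR_diff_right[symmetric] sum_subtractf scaleR_diff_left)
    then have "norm (g z - g z') = norm (\<Sum>j<2*N. (G j z - G j z') *\<^sub>R dir N j) / real N"
      by simp
    also have "\<dots> \<le> lam * rho z z' * (2 / sin (pi / real N / 2) + pi) / real N"
      unfolding G_def
      by (intro divide_right_mono norm_sum_scaleR_dir_le assms(6,7)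
          mcshane_lipschitz[OF MS XZ assms(3,4) coord_lip \<open>z \<in> Z\<close> \<open>z' \<in> Z\<close>]) simp_all
    also have "\<dots> = (upper_const N * lam) * rho z z'"
      unfolding upper_const_def by simp
    finally show "norm (g z - g z') \<le> (upper_const N * lam) * rho z z'" .
  qed
qed

lemma LE_const_upper_const:
  assumes "even N" "N > 0"
  shows "LE_const TYPE('z) TYPE(complex) (upper_const N)"
  unfolding LE_const_def
proof (intro allI impI)
  fix Z :: "'z set" and rho X and f :: "'z \<Rightarrow> complex"
  assume "Metric_space Z rho \<and> X \<subseteq> Z"
  then have MS: "Metric_space Z rho" and XZ: "X \<subseteq> Z" by auto
  have c_pos: "upper_const N > 0" using upper_const_pos assms(2) .
  show "\<exists>g. (\<forall>x\<in>X. g x = f x) \<and> Lip rho Z g \<le> ennreal (upper_const N) * Lip rho X f"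
  proof (cases "Lip rho X f = top")
    case True
    then show ?thesis using c_pos by (intro exI[of _ f]) (simp add: ennreal_mult_top)
  next
    case False
    then obtain lam where lam: "Lip rho X f = ennreal lam" "lam \<ge> 0"
      by (cases "Lip rho X f") auto
    show ?thesis
    proof (cases "X = {}")
      case True
      have "Lip rho Z (\<lambda>_. 0::complex) \<le> ennreal 0" by (rule Lip_le_ennrealI[OF MS]) simp
      then show ?thesis using True by (intro exI[of _ "\<lambda>_. 0"]) simp
    next
      case False
      have f_lip: "norm (f x - f y) \<le> lam * rho x y" if "x \<in> X" "y \<in> X" for x y
        by (rule Lip_le_ennrealD[OF Metric_space.subspace[OF MS XZ]]) (use lam that in auto)
      obtain g where g_ext: "\<And>x. x \<in> X \<Longrightarrow> g x = f x"
        and g_lip: "\<And>z z'. z \<in> Z \<Longrightarrow> z' \<in> Z \<Longrightarrow> norm (g z - g z') \<le> (upper_const N * lam) * rho z z'"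
        using frame_mcshane_extension[OF MS XZ False lam(2) f_lip assms] by blast
      have "Lip rho Z g \<le> ennreal (upper_const N * lam)"
        by (rule Lip_le_ennrealI[OF MS g_lip])
      then show ?thesis
        using g_ext lam c_pos by (intro exI[of _ g]) (simp add: ennreal_mult)
    qed
  qed
qed

lemma upper_const_tendsto: "((\<lambda>m. upper_const (2 * m)) \<longlongrightarrow> 4 / pi) sequentially"
proof -
  have "((\<lambda>x::real. (2 / sin (pi / (2*x) / 2) + pi) / (2*x)) \<longlongrightarrow> 4/pi) at_top"
    by real_asymp
  from filterlim_compose[OF this filterlim_real_sequentially]
  show ?thesis unfolding upper_const_def by simp
qed

lemma LE_complex_le_four_div_pi: "LE TYPE('z) TYPE(complex) \<le> 4 / pi"
proof -
  let ?S = "{c. 0 \<le> c \<and> LE_const TYPE('z) TYPE(complex) c}"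
  have "Inf ?S \<le> upper_const (2 * m)" if "m > 0" for m
    by (rule cInf_lower) (use that LE_const_upper_const[of "2 * m"] upper_const_pos[of "2 * m"] in
        \<open>auto intro: bdd_belowI[of _ 0]\<close>)
  then have "\<forall>\<^sub>F m in sequentially. Inf ?S \<le> upper_const (2 * m)"
    by (simp add: eventually_sequentially) (metis Suc_le_eq)
  then show ?thesis
    unfolding LE_def by (rule tendsto_lowerbound[OF upper_const_tendsto]) simp
qed

section \<open>The lower bound: a test space in \<open>\<ell>\<^sub>\<infinity>\<^sup>N\<close>\<close>

text \<open>Points of \<open>\<ell>\<^sub>\<infinity>\<^sup>N\<close> are modelled as functions \<^typ>\<open>nat \<Rightarrow> real\<close> vanishing outside
  \<open>{..<N}\<close>.\<close>

definition sign_vec :: "nat \<Rightarrow> nat \<Rightarrow> nat \<Rightarrow> real" where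
  "sign_vec N i = (\<lambda>k. if k < N then sgn (cos ((real i - real k + 1/2) * (pi / real N))) else 0)"

definition dir_coords :: "nat \<Rightarrow> complex \<Rightarrow> nat \<Rightarrow> real" where
  "dir_coords N w = (\<lambda>k. if k < N then w \<bullet> dir N k else 0)"

definition sign_comb :: "nat \<Rightarrow> (nat \<Rightarrow> int) \<Rightarrow> nat \<Rightarrow> real" where
  "sign_comb N n = (\<lambda>k. \<Sum>i<N. real_of_int (n i) * sign_vec N i k)"

definition sup_dist :: "nat \<Rightarrow> (nat \<Rightarrow> real) \<Rightarrow> (nat \<Rightarrow> real) \<Rightarrow> real" where
  "sup_dist N y y' = Max ((\<lambda>k. \<bar>y k - y' k\<bar>) ` {..<N})"

definition grid :: "real \<Rightarrow> int \<Rightarrow> int \<Rightarrow> complex" where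
  "grid W a b = of_real W * Complex (of_int a) (of_int b)"

definition test_space :: "nat \<Rightarrow> real \<Rightarrow> (nat \<Rightarrow> real) set" where
  "test_space N W = {sign_comb N n + dir_coords N (grid W a b) | n a b. True}"

definition grid_image :: "nat \<Rightarrow> real \<Rightarrow> (nat \<Rightarrow> real) set" where
  "grid_image N W = {dir_coords N (grid W a b) | a b. True}"

definition from_dir_coords :: "nat \<Rightarrow> (nat \<Rightarrow> real) \<Rightarrow> complex" where
  "from_dir_coords N y = Complex (y 0) (y (N div 2))"

lemma sup_dist_ge: "k < N \<Longrightarrow> \<bar>y k - y' k\<bar> \<le> sup_dist N y y'"
  unfolding sup_dist_def by (rule Max_ge) auto

lemma sup_dist_le: "N > 0 \<Longrightarrow> (\<And>k. k < N \<Longrightarrow> \<bar>y k - y' k\<bar> \<le> B) \<Longrightarrow> sup_dist N y y' \<le> B"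
  unfolding sup_dist_def by (subst Max_le_iff) auto

lemma sup_dist_commute: "sup_dist N y y' = sup_dist N y' y"
  unfolding sup_dist_def by (simp add: abs_minus_commute)

lemma sup_dist_add_right: "sup_dist N (y + z) (y' + z) = sup_dist N y y'"
  unfolding sup_dist_def by simp

lemma sup_dist_add_self: "sup_dist N (y + z) z = sup_dist N y 0"
  unfolding sup_dist_def by simp

lemma grid_add: "grid W a b + grid W c d = grid W (a + c) (b + d)"
  unfolding grid_def by (simp add: complex_eq_iff algebra_simps)

lemma grid_zero [simp]: "grid W 0 0 = 0"
  unfolding grid_def by (simp add: complex_eq_iff)

lemma dir_coords_add: "dir_coords N (w + w') = dir_coords N w + dir_coords N w'"
  unfolding dir_coords_def by (auto simp: inner_add_left)

lemma dir_coords_zero [simp]: "dir_coords N 0 = 0"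
  unfolding dir_coords_def by auto

lemma sign_comb_add: "sign_comb N (n + n') = sign_comb N n + sign_comb N n'"
  unfolding sign_comb_def by (auto simp: sum.distrib algebra_simps)

lemma sign_comb_zero [simp]: "sign_comb N 0 = 0"
  unfolding sign_comb_def by auto

lemma sign_comb_in_test_space: "sign_comb N n \<in> test_space N W"
  unfolding test_space_def by (intro CollectI exI[of _ n] exI[of _ "0::int"]) simp

lemma test_space_add_grid:
  assumes "y \<in> test_space N W"
  shows "y + dir_coords N (grid W a b) \<in> test_space N W"
proof -
  obtain n c d where "y = sign_comb N n + dir_coords N (grid W c d)"
    using assms unfolding test_space_def by blast
  then have "y + dir_coords N (grid W a b) = sign_comb N n + dir_coords N (grid W (c + a) (d + b))"
    by (simp add: add.assoc dir_coords_add[symmetric] grid_add)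
  then show ?thesis unfolding test_space_def by blast
qed

lemma grid_image_subset: "grid_image N W \<subseteq> test_space N W"
proof
  fix y assume "y \<in> grid_image N W"
  then obtain a b where "y = sign_comb N 0 + dir_coords N (grid W a b)"
    unfolding grid_image_def by auto
  then show "y \<in> test_space N W" unfolding test_space_def by blast
qed

lemma countable_test_space: "countable (test_space N W)"
proof -
  let ?F = "\<lambda>(n, a, b). sign_comb N n + dir_coords N (grid W a b)"
  have "test_space N W \<subseteq> ?F ` (PiE {..<N} (\<lambda>_. UNIV) \<times> UNIV \<times> UNIV)"
  proof
    fix y assume "y \<in> test_space N W"
    then obtain n a b where y: "y = sign_comb N n + dir_coords N (grid W a b)"
      unfolding test_space_def by blast
    have "sign_comb N n = sign_comb N (restrict n {..<N})"
      unfolding sign_comb_def by simp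
    then show "y \<in> ?F ` (PiE {..<N} (\<lambda>_. UNIV) \<times> UNIV \<times> UNIV)"
      unfolding y by (intro image_eqI[of _ _ "(restrict n {..<N}, a, b)"]) auto
  qed
  moreover have "countable (PiE {..<N} (\<lambda>_. UNIV :: int set) \<times> (UNIV :: int set) \<times> (UNIV :: int set))"
    by (intro countable_SIGMA countable_PiE) auto
  ultimately show ?thesis by (rule countable_subset[OF _ countable_image])
qed

lemma metric_space_test_space:
  assumes "N > 0"
  shows "Metric_space (test_space N W) (sup_dist N)"
proof
  fix x y
  show "0 \<le> sup_dist N x y" using sup_dist_ge[of 0 N x y] assms by simp
  show "sup_dist N x y = sup_dist N y x" by (rule sup_dist_commute)
next
  fix x y assume "x \<in> test_space N W" "y \<in> test_space N W"
  then have outside: "x k = 0" "y k = 0" if "k \<ge> N" for k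
    using that unfolding test_space_def sign_comb_def sign_vec_def dir_coords_def by auto
  show "sup_dist N x y = 0 \<longleftrightarrow> x = y"
  proof
    assume "sup_dist N x y = 0"
    then have "x k = y k" for k
      using sup_dist_ge[of k N x y] outside[of k] by (cases "k < N") auto
    then show "x = y" by blast
  qed (use assms in \<open>auto simp: sup_dist_def image_constant_conv\<close>)
next
  fix x y z
  show "sup_dist N x z \<le> sup_dist N x y + sup_dist N y z"
  proof (rule sup_dist_le[OF assms])
    fix k assume "k < N"
    then show "\<bar>x k - z k\<bar> \<le> sup_dist N x y + sup_dist N y z"
      using sup_dist_ge[of k N x y] sup_dist_ge[of k N y z] by linarith
  qed
qed

lemma from_dir_coords_dir_coords:
  assumes "even N" "N > 0"
  shows "from_dir_coords N (dir_coords N w) = w"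
proof -
  obtain m where N: "N = 2 * m" using assms(1) by (rule evenE)
  have "real m * (pi / real N) = pi / 2" using N assms(2) by simp
  then show ?thesis using N assms(2)
    unfolding from_dir_coords_def dir_coords_def dir_def by (simp add: complex_eq_iff inner_complex_def)
qed

lemma abs_sign_vec_le: "\<bar>sign_vec N i k\<bar> \<le> 1"
  unfolding sign_vec_def by (auto simp: sgn_real_def)

lemma sign_comb_unit:
  assumes "i < N"
  shows "sign_comb N (0(i := 1)) = sign_vec N i"
proof
  fix k
  have "(\<Sum>j<N. real_of_int ((0(i := 1)) j) * sign_vec N j k) = (\<Sum>j<N. if j = i then sign_vec N j k else 0)"
    by (rule sum.cong) auto
  then show "sign_comb N (0(i := 1)) k = sign_vec N i k"
    unfolding sign_comb_def using assms by (simp add: sum.delta)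
qed

lemma sup_dist_sign_comb_unit_step:
  assumes "N > 0" "i < N"
  shows "sup_dist N (sign_comb N (n + 0(i := 1))) (sign_comb N n) \<le> 1"
proof -
  have "sign_comb N (n + 0(i := 1)) = sign_vec N i + sign_comb N n"
    by (simp add: sign_comb_add sign_comb_unit[OF assms(2)] add.commute)
  moreover have "sup_dist N (sign_vec N i) 0 \<le> 1"
    by (rule sup_dist_le[OF assms(1)]) (simp add: abs_sign_vec_le)
  ultimately show ?thesis by (simp add: sup_dist_add_self)
qed

lemma abs_sign_comb_le: "\<bar>sign_comb N n k\<bar> \<le> (\<Sum>i<N. \<bar>real_of_int (n i)\<bar>)"
proof -
  have "\<bar>sign_comb N n k\<bar> \<le> (\<Sum>i<N. \<bar>real_of_int (n i) * sign_vec N i k\<bar>)"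
    unfolding sign_comb_def by (rule sum_abs)
  also have "\<dots> \<le> (\<Sum>i<N. \<bar>real_of_int (n i)\<bar>)"
    by (intro sum_mono) (simp add: abs_mult mult_left_le abs_sign_vec_le)
  finally show ?thesis .
qed

definition sign_coeff :: "nat \<Rightarrow> complex \<Rightarrow> nat \<Rightarrow> real" where
  "sign_coeff N w i = sin (pi / real N / 2) * (w \<bullet> mid_dir N i)"

definition floor_sign_coeff :: "nat \<Rightarrow> complex \<Rightarrow> nat \<Rightarrow> int" where
  "floor_sign_coeff N w = (\<lambda>i. if i < N then \<lfloor>sign_coeff N w i\<rfloor> else 0)"

lemma dir_coords_eq_sum_sign_coeff:
  assumes "even N" "N > 0" "k < N"
  shows "dir_coords N w k = (\<Sum>i<N. sign_coeff N w i * sign_vec N i k)"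
proof -
  let ?S = "sin (pi / real N / 2)"
  have "?S > 0" by (rule sin_quarter_step_pos[OF assms(2)])
  have "w \<bullet> (\<Sum>i<N. sgn (cos ((real i - real k + 1/2) * (pi / real N))) *\<^sub>R mid_dir N i)
      = (w \<bullet> dir N k) / ?S"
    unfolding sum_sign_cos_mid_dir[OF assms(1,2)] by (simp add: inner_complex_def add_divide_distrib)
  then have "w \<bullet> dir N k = ?S * (\<Sum>i<N. sgn (cos ((real i - real k + 1/2) * (pi / real N))) * (w \<bullet> mid_dir N i))"
    using \<open>?S > 0\<close> by (simp add: inner_sum_right field_simps)
  also have "\<dots> = (\<Sum>i<N. sign_coeff N w i * sign_vec N i k)"
    unfolding sum_distrib_left sign_coeff_def sign_vec_def using assms(3) by (simp add: algebra_simps)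
  finally have "w \<bullet> dir N k = (\<Sum>i<N. sign_coeff N w i * sign_vec N i k)" .
  moreover have "dir_coords N w k = w \<bullet> dir N k" unfolding dir_coords_def using assms(3) by simp
  ultimately show ?thesis by simp
qed

lemma sup_dist_round_dir_coords:
  assumes "even N" "N > 0"
  shows "sup_dist N (sign_comb N n + dir_coords N w) (sign_comb N (n + floor_sign_coeff N w)) \<le> real N"
proof (rule sup_dist_le[OF assms(2)])
  fix k assume "k < N"
  have "(sign_comb N n + dir_coords N w) k - sign_comb N (n + floor_sign_coeff N w) k
      = dir_coords N w k - sign_comb N (floor_sign_coeff N w) k"
    by (simp add: sign_comb_add)
  also have "\<dots> = (\<Sum>i<N. (sign_coeff N w i - real_of_int (floor_sign_coeff N w i)) * sign_vec N i k)"
    unfolding dir_coords_eq_sum_sign_coeff[OF assms \<open>k < N\<close>] sign_comb_def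
    by (simp add: sum_subtractf algebra_simps)
  also have "\<bar>\<dots>\<bar> \<le> (\<Sum>i<N. 1)"
  proof (rule order_trans[OF sum_abs sum_mono])
    fix i assume "i \<in> {..<N}"
    then have "\<bar>sign_coeff N w i - real_of_int (floor_sign_coeff N w i)\<bar> \<le> 1"
      unfolding floor_sign_coeff_def by simp linarith
    then show "\<bar>(sign_coeff N w i - real_of_int (floor_sign_coeff N w i)) * sign_vec N i k\<bar> \<le> 1"
      using abs_sign_vec_le[of N i k] by (simp add: abs_mult mult_le_one)
  qed
  finally show "\<bar>(sign_comb N n + dir_coords N w) k - sign_comb N (n + floor_sign_coeff N w) k\<bar> \<le> real N"
    by simp
qed

lemma exists_dir_close:
  assumes "N > 0"
  shows "\<exists>k<N. cos (pi / real N / 2) * norm d \<le> \<bar>d \<bullet> dir N k\<bar>"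
proof -
  define h where "h = pi / real N"
  have h_pos: "h > 0" using assms by (simp add: h_def)
  define \<alpha> where "\<alpha> = Arg d + 2 * pi"
  have alpha_nonneg: "\<alpha> \<ge> 0" using Arg_bounded[of d] unfolding \<alpha>_def by simp
  have d_polar: "d = complex_of_real (norm d) * cis \<alpha>"
  proof -
    have "cis \<alpha> = cis (Arg d)" unfolding \<alpha>_def by (simp add: cis_mult[symmetric])
    then show ?thesis using rcis_cmod_Arg[of d] by (simp add: rcis_def)
  qed
  define q where "q = nat \<lfloor>\<alpha> / h + 1/2\<rfloor>"
  have "\<alpha> / h + 1/2 \<ge> 0" using alpha_nonneg h_pos by simp
  then have q_eq: "real q = of_int \<lfloor>\<alpha> / h + 1/2\<rfloor>" unfolding q_def by simp
  have q_bounds: "real q \<le> \<alpha> / h + 1/2" "\<alpha> / h + 1/2 < real q + 1" unfolding q_eq by linarith+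
  have "(real q - 1/2) * h \<le> \<alpha>" using q_bounds(1) h_pos by (simp add: field_simps)
  moreover have "\<alpha> < (real q + 1/2) * h" using q_bounds(2) h_pos by (simp add: field_simps)
  ultimately have near: "\<bar>\<alpha> - real q * h\<bar> \<le> h/2"
    by (simp only: abs_le_iff) (simp add: algebra_simps)
  define k where "k = q mod N"
  define j where "j = q div N"
  have "k < N" unfolding k_def using assms by simp
  have qjk: "real q = real j * real N + real k" unfolding j_def k_def
    by (metis div_mult_mod_eq of_nat_add of_nat_mult)
  have Nh: "real N * h = pi" using assms by (simp add: h_def)
  have shift: "\<alpha> - real k * h = (\<alpha> - real q * h) + real j * pi"
    using qjk Nh by (simp add: algebra_simps)
  have "cos (h/2) \<le> cos \<bar>\<alpha> - real q * h\<bar>"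
  proof (rule cos_monotone_0_pi_le)
    show "0 \<le> \<bar>\<alpha> - real q * h\<bar>" by simp
    show "\<bar>\<alpha> - real q * h\<bar> \<le> h/2" by (rule near)
    have "pi / real N \<le> pi / 1" by (rule divide_left_mono) (use assms in auto)
    then have "h \<le> pi" unfolding h_def by simp
    then show "h/2 \<le> pi" using pi_gt_zero by linarith
  qed
  also have "\<dots> \<le> \<bar>cos (\<alpha> - real q * h)\<bar>" by simp
  also have "\<dots> = \<bar>cos (\<alpha> - real k * h)\<bar>"
    unfolding shift cos_add by (simp add: abs_mult)
  finally have cos_le: "cos (h/2) \<le> \<bar>cos (\<alpha> - real k * h)\<bar>" .
  have "d \<bullet> dir N k = norm d * cos (\<alpha> - real k * h)"
    by (subst d_polar) (simp add: dir_def h_def inner_complex_def cos_diff algebra_simps)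
  then have "\<bar>d \<bullet> dir N k\<bar> = norm d * \<bar>cos (\<alpha> - real k * h)\<bar>" by (simp add: abs_mult)
  then have "cos (h/2) * norm d \<le> \<bar>d \<bullet> dir N k\<bar>"
    using cos_le by (simp add: mult.commute mult_left_mono)
  then show ?thesis using \<open>k < N\<close> unfolding h_def by blast
qed

lemma Lip_from_dir_coords_grid_image:
  assumes "even N" "N > 0"
  shows "Lip (sup_dist N) (grid_image N W) (from_dir_coords N) \<le> ennreal (1 / cos (pi / real N / 2))"
proof (rule Lip_le_ennrealI)
  show "Metric_space (grid_image N W) (sup_dist N)"
    by (rule Metric_space.subspace[OF metric_space_test_space[OF assms(2)] grid_image_subset])
  fix x y assume "x \<in> grid_image N W" "y \<in> grid_image N W"
  then obtain v w where x: "x = dir_coords N v" and y: "y = dir_coords N w"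
    unfolding grid_image_def by blast
  define C where "C = cos (pi / real N / 2)"
  have "N \<ge> 2" using assms by (auto elim: evenE)
  then have "C > 0" unfolding C_def by (rule cos_quarter_step_pos)
  obtain k where "k < N" "C * norm (v - w) \<le> \<bar>(v - w) \<bullet> dir N k\<bar>"
    using exists_dir_close[OF assms(2)] unfolding C_def by blast
  moreover have "\<bar>(v - w) \<bullet> dir N k\<bar> = \<bar>x k - y k\<bar>"
    unfolding x y dir_coords_def using \<open>k < N\<close> by (simp add: inner_diff_left)
  ultimately have "C * norm (v - w) \<le> sup_dist N x y"
    using sup_dist_ge[of k N x y] by linarith
  then have "norm (v - w) \<le> 1 / C * sup_dist N x y"
    using \<open>C > 0\<close> by (simp add: field_simps)
  then show "norm (from_dir_coords N x - from_dir_coords N y) \<le> 1 / cos (pi / real N / 2) * sup_dist N x y"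
    unfolding x y from_dir_coords_dir_coords[OF assms] C_def .
qed

section \<open>Averages over boxes of integer vectors\<close>

definition int_box :: "nat \<Rightarrow> nat \<Rightarrow> (nat \<Rightarrow> int) set" where
  "int_box N K = PiE {..<N} (\<lambda>_. {- int K..int K})"

definition l1_size :: "nat \<Rightarrow> (nat \<Rightarrow> int) \<Rightarrow> nat" where
  "l1_size N r = (\<Sum>j<N. nat \<bar>r j\<bar>)"

lemma card_int_interval: "card {- int K..int K} = 2 * K + 1"
  by (simp add: nat_add_distrib nat_mult_distrib)

lemma card_int_box_pos: "card (int_box N K) > 0"
  unfolding int_box_def by (subst card_PiE) (auto simp: card_int_interval)

lemma abs_le_of_mem_int_box: "n \<in> int_box N K \<Longrightarrow> i < N \<Longrightarrow> \<bar>n i\<bar> \<le> int K"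
proof -
  assume "n \<in> int_box N K" "i < N"
  then have "n i \<in> {- int K..int K}" unfolding int_box_def by (auto simp: PiE_iff)
  then show ?thesis by auto
qed

lemma sum_int_telescope:
  fixes \<psi> :: "int \<Rightarrow> 'a::ab_group_add"
  assumes "a \<le> b + 1"
  shows "(\<Sum>y\<in>{a..b}. \<psi> (y + 1) - \<psi> y) = \<psi> (b + 1) - \<psi> a"
proof -
  have "(\<Sum>y\<in>{a..b}. \<psi> (y + 1) - \<psi> y) = \<psi> (b + 1) - \<psi> a" if "b + 1 - a = int k" for k b
    using that
  proof (induction k arbitrary: b)
    case (Suc k)
    then have "{a..b} = insert b {a..b-1}" by auto
    then show ?case using Suc.IH[of "b - 1"] Suc.prems by simp
  qed simp
  from this[where k = "nat (b + 1 - a)" and b = b] show ?thesis using assms by simp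
qed

lemma norm_sum_int_interval_shift_le:
  fixes \<psi> :: "int \<Rightarrow> 'a::real_normed_vector"
  assumes "s = 1 \<or> s = -1" and bound: "\<And>a b. norm (\<psi> a - \<psi> b) \<le> C"
  shows "norm (\<Sum>y\<in>{- int K..int K}. \<psi> (y + s) - \<psi> y) \<le> C"
  using assms(1)
proof
  assume "s = 1"
  then show ?thesis using sum_int_telescope[of "- int K" "int K" \<psi>] bound by simp
next
  assume "s = -1"
  have "(\<Sum>y\<in>{- int K..int K}. \<psi> (y - 1) - \<psi> y)
      = - (\<Sum>y\<in>{- int K..int K}. \<psi> (y + 1 - 1) - \<psi> (y - 1))"
    by (simp add: sum_negf[symmetric])
  also have "\<dots> = \<psi> (- int K - 1) - \<psi> (int K)"
    using sum_int_telescope[of "- int K" "int K" "\<lambda>t. \<psi> (t - 1)"] by simp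
  finally show ?thesis using \<open>s = -1\<close> bound by (simp add: norm_minus_commute)
qed

definition unit_steps :: "(int \<times> int) set" where
  "unit_steps = {(1, 0), (-1, 0), (0, 1), (0, -1)}"

lemma norm_sum_int_square_shift_le:
  fixes \<phi> :: "int \<Rightarrow> int \<Rightarrow> 'a::real_normed_vector"
  assumes step: "(da, db) \<in> unit_steps" and bound: "\<And>a b a' b'. norm (\<phi> a b - \<phi> a' b') \<le> C"
  shows "norm (\<Sum>a\<in>{- int M..int M}. \<Sum>b\<in>{- int M..int M}. \<phi> (a + da) (b + db) - \<phi> a b)
    \<le> (\<Sum>c\<in>{- int M..int M}. C)"
proof -
  let ?I = "{- int M..int M}"
  consider "da = 0" "db = 1 \<or> db = -1" | "db = 0" "da = 1 \<or> da = -1"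
    using step unfolding unit_steps_def by auto
  then show ?thesis
  proof cases
    case 1
    have "norm (\<Sum>b\<in>?I. \<phi> a (b + db) - \<phi> a b) \<le> C" for a
      by (rule norm_sum_int_interval_shift_le[OF 1(2), where \<psi> = "\<lambda>b. \<phi> a b"]) (rule bound)
    then show ?thesis
      unfolding 1(1) by (intro order_trans[OF norm_sum sum_mono]) simp
  next
    case 2
    have inner: "norm (\<Sum>a\<in>?I. \<phi> (a + da) b - \<phi> a b) \<le> C" for b
      by (rule norm_sum_int_interval_shift_le[OF 2(2), where \<psi> = "\<lambda>a. \<phi> a b"]) (rule bound)
    have "(\<Sum>a\<in>?I. \<Sum>b\<in>?I. \<phi> (a + da) (b + db) - \<phi> a b) = (\<Sum>b\<in>?I. \<Sum>a\<in>?I. \<phi> (a + da) b - \<phi> a b)"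
      unfolding 2(1) add_0_right by (rule sum.swap)
    then show ?thesis
      by (simp only:) (rule order_trans[OF norm_sum sum_mono], rule inner)
  qed
qed

lemma int_box_split:
  fixes K :: nat
  assumes "i < N"
  defines "P \<equiv> PiE ({..<N} - {i}) (\<lambda>_. {- int K..int K})"
  shows "(\<Sum>n\<in>int_box N K. H n) = (\<Sum>g\<in>P. \<Sum>y\<in>{- int K..int K}. H (g(i := y)))"
    and "card (int_box N K) = (2 * K + 1) * card P"
proof -
  let ?T = "\<lambda>_::nat. {- int K..int K}"
  have "{..<N} = insert i ({..<N} - {i})" using assms by auto
  then have box: "int_box N K = (\<lambda>(y, g). g(i := y)) ` (?T i \<times> P)"
    unfolding int_box_def P_def by (subst \<open>{..<N} = _\<close>) (rule PiE_insert_eq)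
  have inj: "inj_on (\<lambda>(y, g). g(i := y)) (?T i \<times> P)"
    unfolding P_def by (rule inj_combinator) simp
  have "(\<Sum>n\<in>int_box N K. H n) = (\<Sum>y\<in>?T i. \<Sum>g\<in>P. H (g(i := y)))"
    unfolding box sum.reindex[OF inj] by (simp add: sum.cartesian_product case_prod_beta)
  then show "(\<Sum>n\<in>int_box N K. H n) = (\<Sum>g\<in>P. \<Sum>y\<in>?T i. H (g(i := y)))"
    by (simp add: sum.swap[of _ "?T i"])
  show "card (int_box N K) = (2 * K + 1) * card P"
    unfolding box card_image[OF inj] card_cartesian_product card_int_interval ..
qed

lemma norm_sum_int_box_shift_unit_le:
  fixes F :: "(nat \<Rightarrow> int) \<Rightarrow> 'a::real_normed_vector"
  assumes "i < N" "s = 1 \<or> s = -1" "\<And>n. norm (F n) \<le> C"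
  shows "norm ((\<Sum>n\<in>int_box N K. F (n + 0(i := s))) - (\<Sum>n\<in>int_box N K. F n))
    \<le> 2 * C * card (int_box N K) / (2 * K + 1)"
proof -
  let ?P = "PiE ({..<N} - {i}) (\<lambda>_. {- int K..int K})"
  have "g(i := y) + 0(i := s) = g(i := y + s)" for g :: "nat \<Rightarrow> int" and y
    by auto
  then have "(\<Sum>n\<in>int_box N K. F (n + 0(i := s))) - (\<Sum>n\<in>int_box N K. F n)
      = (\<Sum>g\<in>?P. \<Sum>y\<in>{- int K..int K}. F (g(i := y + s)) - F (g(i := y)))"
    unfolding int_box_split(1)[OF assms(1)] by (simp add: sum_subtractf)
  also have "norm \<dots> \<le> (\<Sum>g\<in>?P. 2 * C)"
  proof (rule order_trans[OF norm_sum sum_mono])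
    fix g
    have "norm (F (g(i := a)) - F (g(i := b))) \<le> 2 * C" for a b
      using norm_triangle_ineq4[of "F (g(i := a))" "F (g(i := b))"] assms(3)[of "g(i := a)"] assms(3)[of "g(i := b)"]
      by linarith
    then show "norm (\<Sum>y\<in>{- int K..int K}. F (g(i := y + s)) - F (g(i := y))) \<le> 2 * C"
      by (rule norm_sum_int_interval_shift_le[OF assms(2)])
  qed
  also have "\<dots> = 2 * C * card (int_box N K) / (2 * K + 1)"
    unfolding int_box_split(2)[OF assms(1)] by (simp add: field_simps)
  finally show ?thesis .
qed

lemma l1_size_eq_0_imp_zero:
  fixes N :: nat
  assumes "\<forall>j\<ge>N. r j = 0" "l1_size N r = 0"
  shows "r = 0"
proof
  fix j show "r j = 0 j"
    using assms by (cases "j < N") (auto simp: l1_size_def)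
qed

lemma l1_size_step:
  fixes N :: nat
  assumes "i < N" "r i \<noteq> 0"
  shows "Suc (l1_size N (r(i := r i - sgn (r i)))) = l1_size N r"
proof -
  have "nat \<bar>r i - sgn (r i)\<bar> + 1 = nat \<bar>r i\<bar>" using assms(2) by (auto simp: sgn_if)
  then show ?thesis
    unfolding l1_size_def using assms(1) by (simp add: sum.remove[of "{..<N}" i])
qed

lemma finite_support_int_induct [consumes 1, case_names zero step]:
  fixes N :: nat and r :: "nat \<Rightarrow> int"
  assumes "\<forall>j\<ge>N. r j = 0" and "P 0"
    and step: "\<And>r i. \<forall>j\<ge>N. r j = 0 \<Longrightarrow> i < N \<Longrightarrow> r i \<noteq> 0
      \<Longrightarrow> P (r(i := r i - sgn (r i))) \<Longrightarrow> P r"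
  shows "P r"
  using assms(1)
proof (induction "l1_size N r" arbitrary: r)
  case 0
  then show ?case using l1_size_eq_0_imp_zero \<open>P 0\<close> by metis
next
  case (Suc k)
  have "l1_size N r \<noteq> 0" using Suc.hyps(2) by simp
  then obtain i where "i < N" "r i \<noteq> 0"
    unfolding l1_size_def by (auto simp: sum_eq_0_iff)
  moreover have "P (r(i := r i - sgn (r i)))"
  proof (rule Suc.hyps(1))
    show "k = l1_size N (r(i := r i - sgn (r i)))"
      using Suc.hyps(2) l1_size_step[where r = r and i = i, OF \<open>i < N\<close> \<open>r i \<noteq> 0\<close>] by simp
    show "\<forall>j\<ge>N. (r(i := r i - sgn (r i))) j = 0" using Suc.prems \<open>i < N\<close> by simp
  qed
  ultimately show ?case by (rule step[OF Suc.prems])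
qed

lemma norm_sum_int_box_shift_le:
  fixes F :: "(nat \<Rightarrow> int) \<Rightarrow> 'a::real_normed_vector"
  assumes "\<And>n. norm (F n) \<le> C" "\<forall>j\<ge>N. r j = 0"
  shows "norm ((\<Sum>n\<in>int_box N K. F (n + r)) - (\<Sum>n\<in>int_box N K. F n))
    \<le> 2 * C * card (int_box N K) / (2 * K + 1) * l1_size N r"
  using assms(2)
proof (induction r rule: finite_support_int_induct)
  case zero
  then show ?case by (simp add: l1_size_def)
next
  case (step r i)
  let ?s = "sgn (r i)" and ?r' = "r(i := r i - sgn (r i))"
  let ?\<Sigma> = "\<lambda>r. \<Sum>n\<in>int_box N K. F (n + r)"
  have "0(i := ?s) + ?r' = r" by (rule ext) simp
  then have "?\<Sigma> r = (\<Sum>n\<in>int_box N K. F (n + 0(i := ?s) + ?r'))"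
    by (simp only: add.assoc)
  then have "norm (?\<Sigma> r - (\<Sum>n\<in>int_box N K. F n))
      = norm (((\<Sum>n\<in>int_box N K. F (n + 0(i := ?s) + ?r')) - ?\<Sigma> ?r') + (?\<Sigma> ?r' - (\<Sum>n\<in>int_box N K. F n)))"
    by simp
  also have "\<dots> \<le> 2 * C * card (int_box N K) / (2 * K + 1)
      + 2 * C * card (int_box N K) / (2 * K + 1) * l1_size N ?r'"
  proof (rule order_trans[OF norm_triangle_ineq add_mono[OF _ step.IH]])
    have "?s = 1 \<or> ?s = -1" using step.hyps(3) by (auto simp: sgn_if)
    then show "norm ((\<Sum>n\<in>int_box N K. F (n + 0(i := ?s) + ?r')) - ?\<Sigma> ?r')
        \<le> 2 * C * card (int_box N K) / (2 * K + 1)"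
      by (rule norm_sum_int_box_shift_unit_le[OF step.hyps(2), where F = "\<lambda>n. F (n + ?r')"])
        (rule assms(1))
  qed
  also have "\<dots> = 2 * C * card (int_box N K) / (2 * K + 1) * l1_size N r"
  proof -
    have "real (l1_size N r) = real (l1_size N ?r') + 1"
      using l1_size_step[where r = r and i = i, OF step.hyps(2,3)] by simp
    then show ?thesis by (simp add: ring_distribs)
  qed
  finally show ?case .
qed

section \<open>The lower bound: averaging a Lipschitz extension\<close>

lemma sum_unit_steps_inner_grid_scaleR_grid:
  "(\<Sum>(a, b)\<in>unit_steps. (grid W a b \<bullet> v) *\<^sub>R grid W a b) = (2 * W^2) *\<^sub>R v"
  by (simp add: unit_steps_def grid_def complex_eq_iff inner_complex_def power2_eq_square
      algebra_simps)

lemma norm_grid_unit_step: "(a, b) \<in> unit_steps \<Longrightarrow> W \<ge> 0 \<Longrightarrow> norm (grid W a b) = W"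
  by (auto simp: unit_steps_def grid_def norm_mult complex_norm)

lemma norm_scaleR_inverse_le:
  fixes X :: "'a::real_normed_vector"
  assumes "c > 0" "norm X \<le> c * B"
  shows "norm ((1 / c) *\<^sub>R X) \<le> B"
  using assms by (simp add: divide_le_eq mult.commute)

lemma sup_dist_sign_comb_zero_le:
  assumes "N > 0" "n \<in> int_box N K"
  shows "sup_dist N (sign_comb N n) 0 \<le> real N * real K"
proof (rule sup_dist_le[OF assms(1)])
  fix k assume "k < N"
  have "\<bar>sign_comb N n k\<bar> \<le> (\<Sum>i<N. \<bar>real_of_int (n i)\<bar>)" by (rule abs_sign_comb_le)
  also have "\<dots> \<le> (\<Sum>i<N. real K)"
    using abs_le_of_mem_int_box[OF assms(2)]
    by (intro sum_mono) (metis lessThan_iff of_int_abs of_int_le_iff of_int_of_nat_eq)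
  finally show "\<bar>sign_comb N n k - 0 k\<bar> \<le> real N * real K" by simp
qed

lemma l1_size_floor_sign_coeff_le:
  assumes "norm w \<le> W"
  shows "real (l1_size N (floor_sign_coeff N w)) \<le> real N * (W + 1)"
proof -
  have "real (l1_size N (floor_sign_coeff N w)) = (\<Sum>j<N. real (nat \<bar>floor_sign_coeff N w j\<bar>))"
    unfolding l1_size_def by simp
  also have "\<dots> \<le> (\<Sum>j<N. W + 1)"
  proof (rule sum_mono)
    fix j assume "j \<in> {..<N}"
    have "\<bar>w \<bullet> mid_dir N j\<bar> \<le> W"
      using Cauchy_Schwarz_ineq2[of w "mid_dir N j"] assms by simp
    moreover have "\<bar>sin (pi / real N / 2)\<bar> \<le> 1" by simp
    ultimately have "\<bar>sign_coeff N w j\<bar> \<le> W"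
      unfolding sign_coeff_def abs_mult by (metis abs_ge_zero mult_le_one mult.left_neutral mult_mono order_trans)
    then show "real (nat \<bar>floor_sign_coeff N w j\<bar>) \<le> W + 1"
      using \<open>j \<in> {..<N}\<close> unfolding floor_sign_coeff_def by simp linarith
  qed
  finally show ?thesis by simp
qed

text \<open>\<open>M\<close> and \<open>K\<close> are the radii of the boxes over which \<open>g\<close> is averaged: over the grid
  translates, which makes it nearly equivariant, and over the sign combinations.\<close>

locale lattice_extension =
  fixes N :: nat and W L :: real and K M :: nat and g :: "(nat \<Rightarrow> real) \<Rightarrow> complex"
  assumes even_N: "even N" and N_pos: "N > 0" and W_pos: "W > 0" and L_nonneg: "L \<ge> 0"
    and g_lip: "\<And>y y'. y \<in> test_space N W \<Longrightarrow> y' \<in> test_space N W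
      \<Longrightarrow> norm (g y - g y') \<le> L * sup_dist N y y'"
    and g_grid: "\<And>a b. g (dir_coords N (grid W a b)) = grid W a b"
begin

definition grid_avg :: "(nat \<Rightarrow> real) \<Rightarrow> complex" where
  "grid_avg y = (1 / real ((2 * M + 1)^2)) *\<^sub>R
     (\<Sum>a\<in>{- int M..int M}. \<Sum>b\<in>{- int M..int M}. g (y + dir_coords N (grid W a b)) - grid W a b)"

lemma grid_avg_lipschitz:
  assumes "y \<in> test_space N W" "y' \<in> test_space N W"
  shows "norm (grid_avg y - grid_avg y') \<le> L * sup_dist N y y'"
proof -
  let ?I = "{- int M..int M}"
  have "norm (\<Sum>a\<in>?I. \<Sum>b\<in>?I. g (y + dir_coords N (grid W a b)) - g (y' + dir_coords N (grid W a b)))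
      \<le> (\<Sum>a\<in>?I. \<Sum>b\<in>?I. L * sup_dist N y y')"
  proof (rule order_trans[OF norm_sum sum_mono], rule order_trans[OF norm_sum sum_mono])
    fix a b
    show "norm (g (y + dir_coords N (grid W a b)) - g (y' + dir_coords N (grid W a b))) \<le> L * sup_dist N y y'"
      using g_lip[OF test_space_add_grid[OF assms(1), of a b] test_space_add_grid[OF assms(2), of a b]]
      by (simp add: sup_dist_add_right)
  qed
  also have "\<dots> = real (card ?I) * (real (card ?I) * (L * sup_dist N y y'))"
    by simp
  also have "\<dots> = real ((2 * M + 1)^2) * (L * sup_dist N y y')"
    unfolding card_int_interval by (simp only: of_nat_power power2_eq_square of_nat_mult mult.assoc)
  finally have "norm ((1 / real ((2 * M + 1)^2)) *\<^sub>R
      (\<Sum>a\<in>?I. \<Sum>b\<in>?I. g (y + dir_coords N (grid W a b)) - g (y' + dir_coords N (grid W a b))))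
    \<le> L * sup_dist N y y'"
    by (rule norm_scaleR_inverse_le[rotated]) simp
  then show ?thesis
    unfolding grid_avg_def by (simp add: scaleR_diff_right[symmetric] sum_subtractf[symmetric])
qed

lemma grid_avg_add_unit_step:
  assumes y: "y \<in> test_space N W" and bound: "\<And>a b. norm (g (y + dir_coords N (grid W a b)) - grid W a b) \<le> B"
    and step: "(da, db) \<in> unit_steps"
  shows "norm (grid_avg (y + dir_coords N (grid W da db)) - grid_avg y - grid W da db)
    \<le> 2 * B / real (2 * M + 1)"
proof -
  let ?I = "{- int M..int M}"
  define \<phi> where "\<phi> a b = g (y + dir_coords N (grid W a b)) - grid W a b" for a b
  have shifted: "g ((y + dir_coords N (grid W da db)) + dir_coords N (grid W a b)) - grid W a b
      = \<phi> (a + da) (b + db) + grid W da db" for a b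
    unfolding \<phi>_def add.assoc dir_coords_add[symmetric] grid_add
    by (simp add: add.commute grid_add[symmetric])
  let ?c = "1 / real ((2 * M + 1)^2)"
  have "grid_avg (y + dir_coords N (grid W da db))
      = ?c *\<^sub>R (\<Sum>a\<in>?I. \<Sum>b\<in>?I. \<phi> (a + da) (b + db)) + ?c *\<^sub>R (\<Sum>a\<in>?I. \<Sum>b\<in>?I. grid W da db)"
    unfolding grid_avg_def shifted by (simp add: sum.distrib scaleR_add_right)
  also have "(\<Sum>a\<in>?I. \<Sum>b\<in>?I. grid W da db) = real (card ?I) *\<^sub>R (real (card ?I) *\<^sub>R grid W da db)"
    by (simp only: sum_constant_scaleR)
  also have "\<dots> = real ((2 * M + 1)^2) *\<^sub>R grid W da db"
    unfolding card_int_interval scaleR_scaleR by (simp only: of_nat_power power2_eq_square of_nat_mult)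
  finally have diff: "grid_avg (y + dir_coords N (grid W da db)) - grid_avg y - grid W da db
      = ?c *\<^sub>R (\<Sum>a\<in>?I. \<Sum>b\<in>?I. \<phi> (a + da) (b + db) - \<phi> a b)"
    unfolding grid_avg_def \<phi>_def[symmetric] by (simp add: sum_subtractf scaleR_diff_right)
  have \<phi>_diff: "norm (\<phi> a b - \<phi> a' b') \<le> 2 * B" for a b a' b'
    using norm_triangle_ineq4[of "\<phi> a b" "\<phi> a' b'"] bound[of a b] bound[of a' b']
    unfolding \<phi>_def by linarith
  have "norm (\<Sum>a\<in>?I. \<Sum>b\<in>?I. \<phi> (a + da) (b + db) - \<phi> a b) \<le> (\<Sum>c\<in>?I. 2 * B)"
    by (rule norm_sum_int_square_shift_le[OF step \<phi>_diff])
  also have "(\<Sum>c\<in>?I. 2 * B) = real ((2 * M + 1)^2) * (2 * B / real (2 * M + 1))"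
  proof -
    have "real (n^2) * (x / real n) = real n * x" if "n > 0" for n :: nat and x :: real
      using that by (simp add: power2_eq_square)
    from this[of "2 * M + 1" "2 * B"] show ?thesis by (simp add: card_int_interval)
  qed
  finally show ?thesis
    unfolding diff by (rule norm_scaleR_inverse_le[rotated]) simp
qed

lemma grid_avg_add_unit_step_sign_comb:
  assumes "n \<in> int_box N K" "(da, db) \<in> unit_steps"
  shows "norm (grid_avg (sign_comb N n + dir_coords N (grid W da db)) - grid_avg (sign_comb N n) - grid W da db)
    \<le> 2 * (L * (real N * real K)) / real (2 * M + 1)"
proof (rule grid_avg_add_unit_step[OF sign_comb_in_test_space _ assms(2)])
  fix a b
  have grid_pt: "dir_coords N (grid W a b) \<in> test_space N W"
    using grid_image_subset unfolding grid_image_def by blast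
  have "norm (g (sign_comb N n + dir_coords N (grid W a b)) - grid W a b)
      = norm (g (sign_comb N n + dir_coords N (grid W a b)) - g (dir_coords N (grid W a b)))"
    by (simp add: g_grid)
  also have "\<dots> \<le> L * sup_dist N (sign_comb N n) 0"
  proof -
    have "sign_comb N n + dir_coords N (grid W a b) \<in> test_space N W"
      by (rule test_space_add_grid[OF sign_comb_in_test_space])
    from g_lip[OF this grid_pt] show ?thesis by (simp add: sup_dist_add_self)
  qed
  also have "\<dots> \<le> L * (real N * real K)"
    by (rule mult_left_mono[OF sup_dist_sign_comb_zero_le[OF N_pos assms(1)] L_nonneg])
  finally show "norm (g (sign_comb N n + dir_coords N (grid W a b)) - grid W a b) \<le> L * (real N * real K)" .
qed

definition incr :: "nat \<Rightarrow> (nat \<Rightarrow> int) \<Rightarrow> complex" where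
  "incr i n = grid_avg (sign_comb N (n + 0(i := 1))) - grid_avg (sign_comb N n)"

definition mean_incr :: "nat \<Rightarrow> complex" where
  "mean_incr i = (1 / card (int_box N K)) *\<^sub>R (\<Sum>n\<in>int_box N K. incr i n)"

definition box_diff :: "(nat \<Rightarrow> int) \<Rightarrow> complex" where
  "box_diff r = (\<Sum>n\<in>int_box N K. grid_avg (sign_comb N (n + r)) - grid_avg (sign_comb N n))"

lemma norm_incr_le:
  assumes "i < N"
  shows "norm (incr i n) \<le> L"
proof -
  have "norm (incr i n) \<le> L * sup_dist N (sign_comb N (n + 0(i := 1))) (sign_comb N n)"
    unfolding incr_def by (rule grid_avg_lipschitz[OF sign_comb_in_test_space sign_comb_in_test_space])
  also have "\<dots> \<le> L * 1"
    by (rule mult_left_mono[OF sup_dist_sign_comb_unit_step[OF N_pos assms] L_nonneg])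
  finally show ?thesis by simp
qed

lemma norm_mean_incr_le:
  assumes "i < N"
  shows "norm (mean_incr i) \<le> L"
proof -
  have "norm (\<Sum>n\<in>int_box N K. incr i n) \<le> card (int_box N K) * L"
    using sum_norm_le[of "int_box N K" "incr i" "\<lambda>_. L"] norm_incr_le[OF assms] by simp
  then show ?thesis
    unfolding mean_incr_def using card_int_box_pos[of N K] by (simp add: field_simps)
qed

lemma box_diff_step:
  assumes "i < N" "r i \<noteq> 0" "\<forall>j\<ge>N. r j = 0"
  defines "r' \<equiv> r(i := r i - sgn (r i))"
  shows "norm (box_diff r - box_diff r' - of_int (sgn (r i)) *\<^sub>R (\<Sum>n\<in>int_box N K. incr i n))
    \<le> 2 * L * card (int_box N K) / (2 * K + 1) * l1_size N r"
proof -
  define H where "H n = grid_avg (sign_comb N (n + r)) - grid_avg (sign_comb N (n + r'))" for n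
  have split: "box_diff r = (\<Sum>n\<in>int_box N K. H n) + box_diff r'"
    unfolding box_diff_def H_def sum.distrib[symmetric] by (rule sum.cong[OF refl]) simp
  have supp': "\<forall>j\<ge>N. r' j = 0" using assms(1,3) by (simp add: r'_def)
  have "l1_size N r' \<le> l1_size N r"
    using l1_size_step[where r = r and i = i, OF assms(1,2)] unfolding r'_def by simp
  then have l1_mono: "2 * L * card (int_box N K) / (2 * K + 1) * l1_size N r'
      \<le> 2 * L * card (int_box N K) / (2 * K + 1) * l1_size N r"
    using L_nonneg by (intro mult_left_mono) auto
  have "norm ((\<Sum>n\<in>int_box N K. H n) - of_int (sgn (r i)) *\<^sub>R (\<Sum>n\<in>int_box N K. incr i n))
      \<le> 2 * L * card (int_box N K) / (2 * K + 1) * l1_size N r"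
  proof (cases "r i > 0")
    case True
    then have "n + r = (n + r') + 0(i := 1)" for n by (simp add: r'_def fun_eq_iff sgn_if)
    then have "H n = incr i (n + r')" for n unfolding H_def incr_def by (simp add: add.assoc)
    then have "norm ((\<Sum>n\<in>int_box N K. H n) - of_int (sgn (r i)) *\<^sub>R (\<Sum>n\<in>int_box N K. incr i n))
        = norm ((\<Sum>n\<in>int_box N K. incr i (n + r')) - (\<Sum>n\<in>int_box N K. incr i n))"
      using True by simp
    also have "\<dots> \<le> 2 * L * card (int_box N K) / (2 * K + 1) * l1_size N r'"
      by (rule norm_sum_int_box_shift_le[OF norm_incr_le[OF assms(1)] supp'])
    finally show ?thesis using l1_mono by linarith
  next
    case False
    then have "n + r' = (n + r) + 0(i := 1)" for n
      using assms(2) by (simp add: r'_def fun_eq_iff sgn_if)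
    then have "H n = - incr i (n + r)" for n unfolding H_def incr_def by (simp add: add.assoc)
    then have "norm ((\<Sum>n\<in>int_box N K. H n) - of_int (sgn (r i)) *\<^sub>R (\<Sum>n\<in>int_box N K. incr i n))
        = norm ((\<Sum>n\<in>int_box N K. incr i (n + r)) - (\<Sum>n\<in>int_box N K. incr i n))"
      using False assms(2) by (simp add: sum_negf norm_minus_commute)
    also have "\<dots> \<le> 2 * L * card (int_box N K) / (2 * K + 1) * l1_size N r"
      by (rule norm_sum_int_box_shift_le[OF norm_incr_le[OF assms(1)] assms(3)])
    finally show ?thesis .
  qed
  then show ?thesis unfolding split by simp
qed

lemma box_diff_approx:
  assumes "\<forall>j\<ge>N. r j = 0"
  shows "norm ((1 / card (int_box N K)) *\<^sub>R box_diff r - (\<Sum>i<N. of_int (r i) *\<^sub>R mean_incr i))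
    \<le> 2 * L / (2 * K + 1) * (real (l1_size N r))^2"
  using assms
proof (induction r rule: finite_support_int_induct)
  case zero
  then show ?case by (simp add: box_diff_def plus_fun_def l1_size_def)
next
  case (step r i)
  let ?r' = "r(i := r i - sgn (r i))" and ?c = "real (card (int_box N K))" and ?s = "sgn (r i)"
  let ?E = "box_diff r - box_diff ?r' - of_int ?s *\<^sub>R (\<Sum>n\<in>int_box N K. incr i n)"
  have l1: "real (l1_size N r) = real (l1_size N ?r') + 1"
    using l1_size_step[where r = r and i = i, OF step.hyps(2,3)] by simp
  have "(\<Sum>j<N. of_int (r j) *\<^sub>R mean_incr j)
      = (\<Sum>j<N. of_int (?r' j) *\<^sub>R mean_incr j + (if j = i then of_int ?s *\<^sub>R mean_incr i else 0))"
    by (rule sum.cong[OF refl]) (auto simp: scaleR_add_left[symmetric])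
  also have "\<dots> = (\<Sum>j<N. of_int (?r' j) *\<^sub>R mean_incr j) + of_int ?s *\<^sub>R mean_incr i"
    using step.hyps(2) by (simp add: sum.distrib)
  finally have coeff_split: "(\<Sum>j<N. of_int (r j) *\<^sub>R mean_incr j)
      = (\<Sum>j<N. of_int (?r' j) *\<^sub>R mean_incr j) + of_int ?s *\<^sub>R mean_incr i" .
  have "of_int ?s *\<^sub>R mean_incr i = (1 / ?c) *\<^sub>R (of_int ?s *\<^sub>R (\<Sum>n\<in>int_box N K. incr i n))"
    unfolding mean_incr_def by (simp add: scaleR_scaleR mult.commute)
  then have "(1 / ?c) *\<^sub>R box_diff r - (\<Sum>j<N. of_int (r j) *\<^sub>R mean_incr j)
      = (1 / ?c) *\<^sub>R ?E + ((1 / ?c) *\<^sub>R box_diff ?r' - (\<Sum>j<N. of_int (?r' j) *\<^sub>R mean_incr j))"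
    unfolding coeff_split by (simp add: algebra_simps)
  then have "norm ((1 / ?c) *\<^sub>R box_diff r - (\<Sum>j<N. of_int (r j) *\<^sub>R mean_incr j))
      = norm ((1 / ?c) *\<^sub>R ?E + ((1 / ?c) *\<^sub>R box_diff ?r' - (\<Sum>j<N. of_int (?r' j) *\<^sub>R mean_incr j)))"
    by (rule arg_cong)
  also have "\<dots> \<le> 2 * L / (2 * K + 1) * l1_size N r + 2 * L / (2 * K + 1) * (real (l1_size N ?r'))^2"
  proof (rule order_trans[OF norm_triangle_ineq add_mono[OF _ step.IH]])
    have "norm ?E \<le> ?c * (2 * L / (2 * K + 1) * l1_size N r)"
      using box_diff_step[OF step.hyps(2,3,1)] by (simp add: mult_ac)
    then show "norm ((1 / ?c) *\<^sub>R ?E) \<le> 2 * L / (2 * K + 1) * l1_size N r"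
      using card_int_box_pos[of N K] by (intro norm_scaleR_inverse_le) auto
  qed
  also have "\<dots> = 2 * L / (2 * K + 1) * (real (l1_size N ?r') + 1 + (real (l1_size N ?r'))^2)"
    unfolding l1 by (simp add: ring_distribs)
  also have "\<dots> \<le> 2 * L / (2 * K + 1) * (real (l1_size N ?r') + 1)^2"
    using L_nonneg by (intro mult_left_mono) (auto simp: power2_eq_square algebra_simps)
  also have "\<dots> = 2 * L / (2 * K + 1) * (real (l1_size N r))^2"
    unfolding l1 by simp
  finally show ?case .
qed

lemma grid_avg_approx_unit_step:
  assumes "n \<in> int_box N K" "(da, db) \<in> unit_steps" "2 * (real N * real K) \<le> 2 * M + 1"
  shows "norm (grid_avg (sign_comb N (n + floor_sign_coeff N (grid W da db))) - grid_avg (sign_comb N n)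
    - grid W da db) \<le> L * real N + L"
proof -
  let ?w = "grid W da db"
  let ?r = "floor_sign_coeff N ?w"
  have "norm (grid_avg (sign_comb N (n + ?r)) - grid_avg (sign_comb N n + dir_coords N ?w))
      \<le> L * sup_dist N (sign_comb N (n + ?r)) (sign_comb N n + dir_coords N ?w)"
    by (rule grid_avg_lipschitz[OF sign_comb_in_test_space test_space_add_grid[OF sign_comb_in_test_space]])
  also have "\<dots> \<le> L * real N"
    using sup_dist_round_dir_coords[OF even_N N_pos, of n ?w] L_nonneg
    by (simp add: sup_dist_commute mult_left_mono)
  finally have rounding: "norm (grid_avg (sign_comb N (n + ?r)) - grid_avg (sign_comb N n + dir_coords N ?w))
      \<le> L * real N" .
  have "2 * (L * (real N * real K)) / real (2 * M + 1) = L * (2 * (real N * real K) / real (2 * M + 1))"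
    by simp
  also have "\<dots> \<le> L * 1"
    by (rule mult_left_mono[OF _ L_nonneg]) (use assms(3) in simp)
  finally have "2 * (L * (real N * real K)) / real (2 * M + 1) \<le> L" by simp
  then have unit: "norm (grid_avg (sign_comb N n + dir_coords N ?w) - grid_avg (sign_comb N n) - ?w) \<le> L"
    using grid_avg_add_unit_step_sign_comb[OF assms(1,2)] by linarith
  have "norm (grid_avg (sign_comb N (n + ?r)) - grid_avg (sign_comb N n) - ?w)
      = norm ((grid_avg (sign_comb N (n + ?r)) - grid_avg (sign_comb N n + dir_coords N ?w))
        + (grid_avg (sign_comb N n + dir_coords N ?w) - grid_avg (sign_comb N n) - ?w))"
    by (simp add: algebra_simps)
  also have "\<dots> \<le> L * real N + L"
    using rounding unit by (intro order_trans[OF norm_triangle_ineq add_mono])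
  finally show ?thesis .
qed

lemma sum_floor_sign_coeff_mean_incr_approx:
  assumes step: "(da, db) \<in> unit_steps"
    and K_large: "2 * (real N * (W + 1))^2 \<le> 2 * K + 1" and M_large: "2 * (real N * real K) \<le> 2 * M + 1"
  shows "norm ((\<Sum>i<N. of_int (floor_sign_coeff N (grid W da db) i) *\<^sub>R mean_incr i) - grid W da db)
    \<le> L * (real N + 2)"
proof -
  let ?w = "grid W da db" and ?c = "real (card (int_box N K))"
  let ?r = "floor_sign_coeff N ?w"
  let ?A = "\<Sum>i<N. of_int (?r i) *\<^sub>R mean_incr i"
  have "(\<Sum>n\<in>int_box N K. ?w) = ?c *\<^sub>R ?w" by (rule sum_constant_scaleR)
  then have "norm ((1 / ?c) *\<^sub>R box_diff ?r - ?w)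
      = norm ((1 / ?c) *\<^sub>R (\<Sum>n\<in>int_box N K. grid_avg (sign_comb N (n + ?r)) - grid_avg (sign_comb N n) - ?w))"
    unfolding box_diff_def using card_int_box_pos[of N K] by (simp add: sum_subtractf scaleR_diff_right)
  also have "\<dots> \<le> L * real N + L"
  proof (rule norm_scaleR_inverse_le)
    show "?c > 0" using card_int_box_pos[of N K] by simp
    show "norm (\<Sum>n\<in>int_box N K. grid_avg (sign_comb N (n + ?r)) - grid_avg (sign_comb N n) - ?w)
        \<le> ?c * (L * real N + L)"
    proof -
      have "norm (\<Sum>n\<in>int_box N K. grid_avg (sign_comb N (n + ?r)) - grid_avg (sign_comb N n) - ?w)
          \<le> (\<Sum>n\<in>int_box N K. L * real N + L)"
        by (rule sum_norm_le) (rule grid_avg_approx_unit_step[OF _ step M_large])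
      then show ?thesis by simp
    qed
  qed
  finally have avg: "norm ((1 / ?c) *\<^sub>R box_diff ?r - ?w) \<le> L * real N + L" .
  have "(real (l1_size N ?r))^2 \<le> (real N * (W + 1))^2"
    using l1_size_floor_sign_coeff_le[of ?w W] norm_grid_unit_step[OF step] W_pos
    by (intro power_mono) auto
  then have "2 * (real (l1_size N ?r))^2 / (2 * K + 1) \<le> 1" using K_large by simp
  then have "L * (2 * (real (l1_size N ?r))^2 / (2 * K + 1)) \<le> L * 1"
    by (rule mult_left_mono[OF _ L_nonneg])
  then have "2 * L / (2 * K + 1) * (real (l1_size N ?r))^2 \<le> L" by (simp add: mult_ac)
  moreover have "\<forall>j\<ge>N. ?r j = 0" by (simp add: floor_sign_coeff_def)
  ultimately have path: "norm ((1 / ?c) *\<^sub>R box_diff ?r - ?A) \<le> L"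
    using box_diff_approx by (meson order_trans)
  have "norm (?A - ?w) \<le> norm ((1 / ?c) *\<^sub>R box_diff ?r - ?w) + norm ((1 / ?c) *\<^sub>R box_diff ?r - ?A)"
    using norm_triangle_ineq[of "(1 / ?c) *\<^sub>R box_diff ?r - ?w" "?A - (1 / ?c) *\<^sub>R box_diff ?r"]
    by (simp add: norm_minus_commute)
  then show ?thesis using avg path by (simp add: algebra_simps)
qed

end

context lattice_extension
begin

definition step_approx :: "int \<Rightarrow> int \<Rightarrow> complex" where
  "step_approx a b = (\<Sum>i<N. of_int (floor_sign_coeff N (grid W a b) i) *\<^sub>R mean_incr i)"

lemma step_approx_inner_ge:
  assumes "(a, b) \<in> unit_steps"
    and "2 * (real N * (W + 1))^2 \<le> 2 * K + 1" "2 * (real N * real K) \<le> 2 * M + 1"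
  shows "W^2 - L * (real N + 2) * W \<le> step_approx a b \<bullet> grid W a b"
proof -
  let ?w = "grid W a b"
  have norm_w: "norm ?w = W" by (rule norm_grid_unit_step[OF assms(1) less_imp_le[OF W_pos]])
  have "\<bar>(step_approx a b - ?w) \<bullet> ?w\<bar> \<le> norm (step_approx a b - ?w) * norm ?w"
    by (rule Cauchy_Schwarz_ineq2)
  also have "\<dots> \<le> L * (real N + 2) * W"
    unfolding norm_w step_approx_def
    by (rule mult_right_mono[OF sum_floor_sign_coeff_mean_incr_approx[OF assms]]) (use W_pos in simp)
  finally have "\<bar>(step_approx a b - ?w) \<bullet> ?w\<bar> \<le> L * (real N + 2) * W" .
  moreover have "step_approx a b \<bullet> ?w = ?w \<bullet> ?w + (step_approx a b - ?w) \<bullet> ?w"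
    by (simp add: inner_diff_left)
  moreover have "?w \<bullet> ?w = W^2" by (simp add: power2_norm_eq_inner[symmetric] norm_w)
  ultimately show ?thesis by linarith
qed

lemma step_approx_inner_le:
  assumes "(a, b) \<in> unit_steps"
  shows "step_approx a b \<bullet> grid W a b
    \<le> (\<Sum>i<N. sign_coeff N (grid W a b) i * (mean_incr i \<bullet> grid W a b)) + real N * (L * W)"
proof -
  let ?w = "grid W a b"
  have norm_w: "norm ?w = W" by (rule norm_grid_unit_step[OF assms less_imp_le[OF W_pos]])
  have "step_approx a b \<bullet> ?w = (\<Sum>i<N. of_int (floor_sign_coeff N ?w i) * (mean_incr i \<bullet> ?w))"
    unfolding step_approx_def by (simp add: inner_sum_left)
  also have "\<dots> \<le> (\<Sum>i<N. sign_coeff N ?w i * (mean_incr i \<bullet> ?w) + L * W)"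
  proof (rule sum_mono)
    fix i assume "i \<in> {..<N}"
    then have rounding: "\<bar>of_int (floor_sign_coeff N ?w i) - sign_coeff N ?w i\<bar> \<le> 1"
      unfolding floor_sign_coeff_def by simp linarith
    have "\<bar>mean_incr i \<bullet> ?w\<bar> \<le> norm (mean_incr i) * norm ?w" by (rule Cauchy_Schwarz_ineq2)
    also have "\<dots> \<le> L * W"
      unfolding norm_w using \<open>i \<in> {..<N}\<close> W_pos by (intro mult_right_mono norm_mean_incr_le) auto
    finally have "\<bar>mean_incr i \<bullet> ?w\<bar> \<le> L * W" .
    have "(of_int (floor_sign_coeff N ?w i) - sign_coeff N ?w i) * (mean_incr i \<bullet> ?w)
        \<le> \<bar>of_int (floor_sign_coeff N ?w i) - sign_coeff N ?w i\<bar> * \<bar>mean_incr i \<bullet> ?w\<bar>"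
      by (metis abs_ge_self abs_mult)
    also have "\<dots> \<le> 1 * (L * W)"
      by (rule mult_mono[OF rounding \<open>\<bar>mean_incr i \<bullet> ?w\<bar> \<le> L * W\<close>]) auto
    finally show "of_int (floor_sign_coeff N ?w i) * (mean_incr i \<bullet> ?w)
        \<le> sign_coeff N ?w i * (mean_incr i \<bullet> ?w) + L * W"
      by (simp add: algebra_simps)
  qed
  finally show ?thesis by (simp add: sum.distrib)
qed

text \<open>Summed over the four unit steps, the coefficients recombine to \<open>2W\<^sup>2 sin(\<pi>/2N) v\<^sub>i\<close>.\<close>

lemma sum_unit_steps_sign_coeff_inner_le:
  "(\<Sum>(a, b)\<in>unit_steps. \<Sum>i<N. sign_coeff N (grid W a b) i * (mean_incr i \<bullet> grid W a b))
    \<le> real N * (sin (pi / real N / 2) * (2 * W^2) * L)"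
proof -
  let ?S = "sin (pi / real N / 2)"
  have "(\<Sum>(a, b)\<in>unit_steps. \<Sum>i<N. sign_coeff N (grid W a b) i * (mean_incr i \<bullet> grid W a b))
      = (\<Sum>i<N. \<Sum>(a, b)\<in>unit_steps. sign_coeff N (grid W a b) i * (mean_incr i \<bullet> grid W a b))"
    by (simp only: split_def) (rule sum.swap)
  also have "\<dots> = (\<Sum>i<N. mean_incr i \<bullet> (\<Sum>(a, b)\<in>unit_steps. sign_coeff N (grid W a b) i *\<^sub>R grid W a b))"
    by (simp add: inner_sum_right case_prod_beta)
  also have "\<dots> = (\<Sum>i<N. (?S * (2 * W^2)) * (mean_incr i \<bullet> mid_dir N i))"
  proof (rule sum.cong[OF refl])
    fix i
    have "(\<Sum>(a, b)\<in>unit_steps. sign_coeff N (grid W a b) i *\<^sub>R grid W a b)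
        = ?S *\<^sub>R (\<Sum>(a, b)\<in>unit_steps. (grid W a b \<bullet> mid_dir N i) *\<^sub>R grid W a b)"
      unfolding sign_coeff_def by (simp add: scaleR_sum_right case_prod_beta)
    also have "\<dots> = (?S * (2 * W^2)) *\<^sub>R mid_dir N i"
      unfolding sum_unit_steps_inner_grid_scaleR_grid by simp
    finally show "mean_incr i \<bullet> (\<Sum>(a, b)\<in>unit_steps. sign_coeff N (grid W a b) i *\<^sub>R grid W a b)
        = (?S * (2 * W^2)) * (mean_incr i \<bullet> mid_dir N i)" by simp
  qed
  also have "\<dots> \<le> (\<Sum>i<N. (?S * (2 * W^2)) * L)"
  proof (rule sum_mono)
    fix i assume "i \<in> {..<N}"
    have "mean_incr i \<bullet> mid_dir N i \<le> L"
      using norm_cauchy_schwarz[of "mean_incr i" "mid_dir N i"] norm_mean_incr_le[of i] \<open>i \<in> {..<N}\<close>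
      by simp
    moreover have "?S \<ge> 0" using sin_quarter_step_pos[OF N_pos] by simp
    ultimately show "(?S * (2 * W^2)) * (mean_incr i \<bullet> mid_dir N i) \<le> (?S * (2 * W^2)) * L"
      by (simp add: mult_left_mono)
  qed
  finally show ?thesis by (simp add: mult.commute)
qed

lemma four_unit_steps_bound:
  assumes "2 * (real N * (W + 1))^2 \<le> 2 * K + 1" "2 * (real N * real K) \<le> 2 * M + 1"
  shows "4 * W \<le> L * (2 * real N * W * sin (pi / real N / 2) + 8 * real N + 8)"
proof -
  let ?S = "sin (pi / real N / 2)"
  have card: "card unit_steps = 4" by (simp add: unit_steps_def)
  have "4 * (W^2 - L * (real N + 2) * W) = (\<Sum>(a, b)\<in>unit_steps. W^2 - L * (real N + 2) * W)"
    by (simp add: card)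
  also have "\<dots> \<le> (\<Sum>(a, b)\<in>unit_steps. step_approx a b \<bullet> grid W a b)"
  proof (rule sum_mono)
    fix p assume "p \<in> unit_steps"
    then show "(case p of (a, b) \<Rightarrow> W^2 - L * (real N + 2) * W) \<le> (case p of (a, b) \<Rightarrow> step_approx a b \<bullet> grid W a b)"
      using step_approx_inner_ge[OF _ assms] by (cases p) simp
  qed
  also have "\<dots> \<le> (\<Sum>(a, b)\<in>unit_steps.
      (\<Sum>i<N. sign_coeff N (grid W a b) i * (mean_incr i \<bullet> grid W a b)) + real N * (L * W))"
  proof (rule sum_mono)
    fix p assume "p \<in> unit_steps"
    then show "(case p of (a, b) \<Rightarrow> step_approx a b \<bullet> grid W a b)
        \<le> (case p of (a, b) \<Rightarrow> (\<Sum>i<N. sign_coeff N (grid W a b) i * (mean_incr i \<bullet> grid W a b)) + real N * (L * W))"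
      using step_approx_inner_le by (cases p) simp
  qed
  also have "\<dots> = (\<Sum>(a, b)\<in>unit_steps. \<Sum>i<N. sign_coeff N (grid W a b) i * (mean_incr i \<bullet> grid W a b))
      + 4 * (real N * (L * W))"
    by (simp add: sum.distrib case_prod_beta card)
  also have "\<dots> \<le> real N * (?S * (2 * W^2) * L) + 4 * (real N * (L * W))"
    using sum_unit_steps_sign_coeff_inner_le by simp
  finally have "W * (4 * W) \<le> W * (L * (2 * real N * W * ?S + 8 * real N + 8))"
    by (simp add: power2_eq_square algebra_simps)
  then show ?thesis using W_pos by simp
qed

lemma four_unit_steps_bound_pi:
  assumes "2 * (real N * (W + 1))^2 \<le> 2 * K + 1" "2 * (real N * real K) \<le> 2 * M + 1"
  shows "4 * W \<le> L * (pi * W + 8 * real N + 8)"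
proof -
  have "2 * real N * W * sin (pi / real N / 2) \<le> 2 * real N * W * (pi / real N / 2)"
    using sin_x_le_x[of "pi / real N / 2"] W_pos by (intro mult_left_mono) simp_all
  also have "\<dots> = pi * W" using N_pos by simp
  finally have "L * (2 * real N * W * sin (pi / real N / 2) + 8 * real N + 8)
      \<le> L * (pi * W + 8 * real N + 8)"
    using L_nonneg by (intro mult_left_mono) simp_all
  with four_unit_steps_bound[OF assms] show ?thesis by linarith
qed

end

lemma le_of_forall_pos_mult_le_add:
  fixes a b C :: real
  assumes "\<And>W. W > 0 \<Longrightarrow> a * W \<le> b * W + C"
  shows "a \<le> b"
proof (rule ccontr)
  assume "\<not> a \<le> b"
  define W where "W = (\<bar>C\<bar> + 1) / (a - b)"
  have "W > 0" using \<open>\<not> a \<le> b\<close> by (simp add: W_def add_pos_nonneg)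
  have "a * W - b * W = (a - b) * W" by (simp add: left_diff_distrib)
  also have "\<dots> = \<bar>C\<bar> + 1" using \<open>\<not> a \<le> b\<close> by (simp add: W_def)
  finally show False using assms[OF \<open>W > 0\<close>] abs_ge_self[of C] by linarith
qed

lemma LE_const_nat_lattice_extension:
  assumes "0 \<le> c" "LE_const TYPE(nat) TYPE(complex) c" "even N" "N > 0" "W > 0"
  obtains g where "lattice_extension N W (c / cos (pi / real N / 2)) g"
proof -
  let ?C = "cos (pi / real N / 2)" and ?L = "c / cos (pi / real N / 2)"
  have "N \<ge> 2" using assms(3,4) by (auto elim: evenE)
  then have "?C > 0" by (rule cos_quarter_step_pos)
  obtain g where g_ext: "\<forall>x\<in>grid_image N W. g x = from_dir_coords N x"
    and g_Lip: "Lip (sup_dist N) (test_space N W) g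
      \<le> ennreal c * Lip (sup_dist N) (grid_image N W) (from_dir_coords N)"
    using LE_const_nat_countable[OF assms(2) countable_test_space
        metric_space_test_space[OF assms(4)] grid_image_subset] by blast
  have "Lip (sup_dist N) (test_space N W) g \<le> ennreal c * ennreal (1 / ?C)"
    by (rule order_trans[OF g_Lip mult_left_mono[OF Lip_from_dir_coords_grid_image[OF assms(3,4)]]])
      simp
  also have "\<dots> = ennreal (c * (1 / ?C))"
    by (rule ennreal_mult[symmetric]) (use assms(1) \<open>?C > 0\<close> in simp_all)
  finally have g_Lip_L: "Lip (sup_dist N) (test_space N W) g \<le> ennreal ?L" by simp
  have "?L \<ge> 0" using assms(1) \<open>?C > 0\<close> by simp
  have "lattice_extension N W ?L g"
  proof
    show "even N" "N > 0" "W > 0" "?L \<ge> 0" by (fact assms(3), fact assms(4), fact assms(5), fact)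
    show "norm (g y - g y') \<le> ?L * sup_dist N y y'"
      if "y \<in> test_space N W" "y' \<in> test_space N W" for y y'
      by (rule Lip_le_ennrealD[OF metric_space_test_space[OF assms(4)] g_Lip_L \<open>?L \<ge> 0\<close> that])
    show "g (dir_coords N (grid W a b)) = grid W a b" for a b
    proof -
      have "dir_coords N (grid W a b) \<in> grid_image N W" unfolding grid_image_def by blast
      then show ?thesis using g_ext from_dir_coords_dir_coords[OF assms(3,4)] by simp
    qed
  qed
  then show ?thesis by (rule that)
qed

lemma LE_const_nat_lower_bound:
  assumes "0 \<le> c" "LE_const TYPE(nat) TYPE(complex) c" "even N" "N > 0"
  shows "4 * cos (pi / real N / 2) \<le> c * pi"
proof -
  let ?C = "cos (pi / real N / 2)"
  have "N \<ge> 2" using assms(3,4) by (auto elim: evenE)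
  then have "?C > 0" by (rule cos_quarter_step_pos)
  have "4 * ?C * W \<le> c * pi * W + c * (8 * real N + 8)" if "W > 0" for W
  proof -
    define K where "K = nat \<lceil>2 * (real N * (W + 1))^2\<rceil>"
    define M where "M = N * K"
    obtain g where ext: "lattice_extension N W (c / ?C) g"
      by (rule LE_const_nat_lattice_extension[OF assms \<open>W > 0\<close>])
    have "2 * (real N * (W + 1))^2 \<le> real K"
      unfolding K_def by (rule real_nat_ceiling_ge)
    then have K_large: "2 * (real N * (W + 1))^2 \<le> 2 * K + 1" by simp
    have M_large: "2 * (real N * real K) \<le> 2 * M + 1" by (simp add: M_def)
    have "4 * W \<le> c / ?C * (pi * W + 8 * real N + 8)"
      by (rule lattice_extension.four_unit_steps_bound_pi[OF ext K_large M_large])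
    then show ?thesis using \<open>?C > 0\<close> by (simp add: field_simps)
  qed
  then show ?thesis by (rule le_of_forall_pos_mult_le_add)
qed

lemma cos_quarter_step_tendsto: "((\<lambda>m. cos (pi / real (2 * m) / 2)) \<longlongrightarrow> 1) sequentially"
proof -
  have "((\<lambda>x::real. cos (pi / (2 * x) / 2)) \<longlongrightarrow> 1) at_top" by real_asymp
  from filterlim_compose[OF this filterlim_real_sequentially] show ?thesis by simp
qed

lemma LE_nat_complex_ge_four_div_pi: "4 / pi \<le> LE TYPE(nat) TYPE(complex)"
  unfolding LE_def
proof (rule cInf_greatest)
  have "upper_const 2 \<in> {c. 0 \<le> c \<and> LE_const TYPE(nat) TYPE(complex) c}"
    using LE_const_upper_const[where 'z = nat, of 2] upper_const_pos[of 2] by simp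
  then show "{c. 0 \<le> c \<and> LE_const TYPE(nat) TYPE(complex) c} \<noteq> {}" by blast
  fix c assume "c \<in> {c. 0 \<le> c \<and> LE_const TYPE(nat) TYPE(complex) c}"
  then have c: "0 \<le> c" "LE_const TYPE(nat) TYPE(complex) c" by auto
  have "\<forall>\<^sub>F m in sequentially. 4 * cos (pi / real (2 * m) / 2) \<le> c * pi"
    unfolding eventually_sequentially
  proof (intro exI[of _ 1] allI impI)
    fix m :: nat assume "1 \<le> m"
    then show "4 * cos (pi / real (2 * m) / 2) \<le> c * pi"
      by (intro LE_const_nat_lower_bound[OF c]) auto
  qed
  from tendsto_le[OF trivial_limit_sequentially tendsto_const
      tendsto_mult[OF tendsto_const cos_quarter_step_tendsto] this]
  show "4 / pi \<le> c" by (simp add: divide_le_eq mult.commute)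
qed

theorem corollary4p1:
  shows "LE TYPE('z) TYPE(complex) \<le> 4 / pi \<and> LE TYPE(nat) TYPE(complex) = 4 / pi"
  using LE_complex_le_four_div_pi LE_complex_le_four_div_pi[where 'z = nat] LE_nat_complex_ge_four_div_pi by auto
end
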